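(* Let $A_1,\dots,A_n:\mathbb{R}^d\rightrightarrows\mathbb{R}^d$ be maximal monotone, $B:\mathbb{R}^d\to\mathbb{R}^d$ monotone and $L$-Lipschitz ($L>0$), and assume $\mathcal{S}\neq\emptyset$. Run Algorithm SPS (described in the context) with $\tau>0$, $p^1$ with $\sum_{i=1}^{n+1}w_i^1=0$, and deterministic stepsizes $\alpha_k>0$, $0<\rho_k\le\bar\rho<1/L$. Suppose that almost surely for every $k$, $\mathbb{E}[\epsilon^k\mid\mathcal{F}_k]=0$, $\mathbb{E}[e^k\mid\mathcal{F}_k]=0$, $\mathbb{E}[\|\epsilon^k\|^2\mid\mathcal{F}_k]\le N_1+N_2\|B(z^k)\|^2$, $\mathbb{E}[\|e^k\|^2\mid\mathcal{F}_k,\mathcal{E}_k]\le N_3+N_4\|B(x_{n+1}^k)\|^2$, with $0\le N_j<\infty$, and let $N=\max_{j}N_j$. Let $$T_k=\frac{\tau}{\bar\rho}\sum_{i=1}^n\|y_i^k-w_i^k\|^2+\frac{1}{\bar\rho\tau}\sum_{i=1}^n\|z^k-x_i^k\|^2+2(1-\bar\rho L)\|B(z^k)-w_{n+1}^k\|^2.$$ Then for every $p^*=(z^*,w_1^*,\dots,w_{n+1}^* )\in\mathcal{S}$, with probability one, for all $k$, $$\mathbb{E}[\|p^{k+1}-p^*\|^2\mid\mathcal{F}_k]\le(1+C_1\alpha_k^2+C_3\alpha_k\rho_k^2)\|p^k-p^*\|^2-\alpha_k\rho_kT_k+C_2\alpha_k^2+C_4\alpha_k\rho_k^2,$$ where $$C_1=24(1+10\bar\rho^2)(n+1)(L^2+1)^2(N+1)^2+8(n+1)\big(2\tau^2+6(n+1)+1+3(n+1)^2\tau^{-2}\big),$$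 $$C_2=16(N+1)\big[1+4\bar\rho^2(n+1)+9\bar\rho^2L^2(N+1)\big]\|B(z^* )\|^2+8\Big\|\sum_{i=1}^nw_i^*\Big\|^2+12\bar\rho^2N\big(2L^2(N+1)+n+1\big)+4N,$$ $$C_3=4NL^3,\qquad C_4=2NL(1+2\|B(z^* )\|^2).$$
   Context: $J_{\tau A}=(I+\tau A)^{-1}$. Extended solution set: $\mathcal{S}=\{(z,w_1,\dots,w_{n+1})\in\mathbb{R}^{(n+2)d}: w_i\in A_i(z)\ (i\le n),\ w_{n+1}=B(z),\ \sum_{i=1}^{n+1}w_i=0\}$. Algorithm SPS: given $p^k=(z^k,w_1^k,\dots,w_{n+1}^k)$, for $i=1,\dots,n$ set $t_i^k=z^k+\tau w_i^k$, $x_i^k=J_{\tau A_i}(t_i^k)$, $y_i^k=\tau^{-1}(t_i^k-x_i^k)$; then $r^k=B(z^k)+\epsilon^k$, $x_{n+1}^k=z^k-\rho_k(r^k-w_{n+1}^k)$, $y_{n+1}^k=B(x_{n+1}^k)+e^k$, where $\epsilon^k,e^k$ are $\mathbb{R}^d$-valued random noise variables; then $z^{k+1}=z^k-\alpha_k\sum_{i=1}^{n+1}y_i^k$ and $w_i^{k+1}=w_i^k-\alpha_k(x_i^k-\frac1{n+1}\sum_{j=1}^{n+1}x_j^k)$, $i=1,\dots,n+1$. $\mathcal{F}_k=\sigma(p^1,\dots,p^k)$, $\mathcal{E}_k=\sigma(\epsilon^k)$; norms on $\mathbb{R}^{(n+2)d}$ are Euclidean. *)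

theory Defs
  imports "HOL-Analysis.Analysis" "HOL-Probability.Probability"
begin

definition monotone_op :: "('a::real_inner \<Rightarrow> 'a set) \<Rightarrow> bool" where
  "monotone_op A \<longleftrightarrow> (\<forall>x y u v. u \<in> A x \<longrightarrow> v \<in> A y \<longrightarrow> inner (u - v) (x - y) \<ge> 0)"

definition maximal_monotone :: "('a::real_inner \<Rightarrow> 'a set) \<Rightarrow> bool" where
  "maximal_monotone A \<longleftrightarrow> monotone_op A \<and>
     (\<forall>A'. monotone_op A' \<and> (\<forall>x. A x \<subseteq> A' x) \<longrightarrow> A' = A)"

definition monotone_fun :: "('a::real_inner \<Rightarrow> 'a) \<Rightarrow> bool" where
  "monotone_fun B \<longleftrightarrow> (\<forall>x y. inner (B x - B y) (x - y) \<ge> 0)"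

text \<open>Resolvent J_{tau A} = (I + tau A)^{-1}: the point x with t in x + tau A(x).\<close>
definition resolvent :: "real \<Rightarrow> ('a::real_vector \<Rightarrow> 'a set) \<Rightarrow> 'a \<Rightarrow> 'a" where
  "resolvent \<tau> A t = (THE x. t \<in> (\<lambda>u. x + \<tau> *\<^sub>R u) ` A x)"

text \<open>Extended solution set S: the point (z, w_1, ..., w_{n+1}), w indexed by 1..n+1.\<close>
definition ext_sol :: "nat \<Rightarrow> (nat \<Rightarrow> 'a::real_vector \<Rightarrow> 'a set) \<Rightarrow> ('a \<Rightarrow> 'a) \<Rightarrow> 'a \<Rightarrow> (nat \<Rightarrow> 'a) \<Rightarrow> bool" where
  "ext_sol n A B zs ws \<longleftrightarrow> (\<forall>i\<in>{1..n}. ws i \<in> A i zs) \<and> ws (n+1) = B zs \<and> (\<Sum>i=1..n+1. ws i) = 0"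

definition ext_dist2 :: "nat \<Rightarrow> 'a::real_normed_vector \<Rightarrow> (nat \<Rightarrow> 'a) \<Rightarrow> 'a \<Rightarrow> (nat \<Rightarrow> 'a) \<Rightarrow> real" where
  "ext_dist2 n z w zs ws = (norm (z - zs))\<^sup>2 + (\<Sum>i=1..n+1. (norm (w i - ws i))\<^sup>2)"

definition gen_sigma :: "'m measure \<Rightarrow> ('m \<Rightarrow> 'a::topological_space) set \<Rightarrow> 'm measure" where
  "gen_sigma M Xs = sigma (space M) {X -` S \<inter> space M | X S. X \<in> Xs \<and> S \<in> sets borel}"

end

theory Submission
  imports Defs
begin

text \<open>The heart of the proof is a deterministic one-step inequality. The update is a step of
  length \<open>\<alpha>\<^sub>k\<close> along the gradient, projected onto the subspace where the \<open>w\<^sub>i\<close> sum to zero,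
  of the separating affine function \<open>\<phi>(p) = \<Sum>\<^sub>i \<langle>z - x\<^sub>i, y\<^sub>i - w\<^sub>i\<rangle>\<close> built from the
  current \<open>x\<^sub>i, y\<^sub>i\<close>, so that
  \<open>\<parallel>p\<^sup>k\<^sup>+\<^sup>1 - p*\<parallel>\<^sup>2 = \<parallel>p\<^sup>k - p*\<parallel>\<^sup>2 - 2 \<alpha>\<^sub>k (\<phi>(p\<^sup>k) - \<phi>(p*)) + \<alpha>\<^sub>k\<^sup>2 \<parallel>\<nabla>\<phi>\<parallel>\<^sup>2\<close>.
  Monotonicity of the \<open>A\<^sub>i\<close> and of \<open>B\<close>, together with the Lipschitz continuity of \<open>B\<close>, bounds
  \<open>\<phi>(p\<^sup>k) - \<phi>(p*)\<close> from below by \<open>\<tau> \<Sum> \<parallel>y\<^sub>i - w\<^sub>i\<parallel>\<^sup>2 + \<rho>\<^sub>k (1 - L \<rho>\<^sub>k) \<parallel>B z - w\<^sub>n\<^sub>+\<^sub>1\<parallel>\<^sup>2\<close> up to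
  terms linear and quadratic in the noises \<open>\<epsilon>\<^sup>k\<close> and \<open>e\<^sup>k\<close>, while \<open>\<parallel>\<nabla>\<phi>\<parallel>\<^sup>2\<close> is bounded by
  the same residuals plus noise. Conditioning on \<open>F\<^sub>k\<close> removes the linear noise terms and
  replaces the quadratic ones by the variance bounds. Finally, the residuals are bounded by
  \<open>\<parallel>p\<^sup>k - p*\<parallel>\<^sup>2\<close> and \<open>\<parallel>B z*\<parallel>\<^sup>2\<close> using the firm nonexpansiveness of the resolvents (which are
  well defined by Minty's theorem), and the coefficients are collected into \<open>C\<^sub>1, \<dots>, C\<^sub>4\<close>.\<close>

section \<open>Resolvents of maximal monotone operators\<close>

lemma monotone_double_sum_nonpos:
  fixes P :: "('a::real_inner \<times> 'a) set"
  assumes "finite P" and v: "\<And>p. p \<in> P \<Longrightarrow> 0 \<le> v p"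
    and mono: "\<And>p q. p \<in> P \<Longrightarrow> q \<in> P \<Longrightarrow> 0 \<le> inner (snd p - snd q) (fst p - fst q)"
  shows "(\<Sum>p\<in>P. \<Sum>q\<in>P. v p * v q * inner (snd p) (fst q - fst p)) \<le> 0"
proof -
  define W where "W = (\<Sum>p\<in>P. \<Sum>q\<in>P. v p * v q * inner (snd p) (fst q - fst p))"
  have "W = (\<Sum>p\<in>P. \<Sum>q\<in>P. v q * v p * inner (snd q) (fst p - fst q))"
    unfolding W_def by (rule sum.swap)
  then have "2 * W = W + (\<Sum>p\<in>P. \<Sum>q\<in>P. v q * v p * inner (snd q) (fst p - fst q))"
    by simp
  also have "\<dots> = (\<Sum>p\<in>P. \<Sum>q\<in>P. - (v p * v q * inner (snd p - snd q) (fst p - fst q)))"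
    by (simp add: W_def sum.distrib[symmetric] algebra_simps inner_diff_left inner_diff_right)
  also have "\<dots> \<le> 0"
    using v mono by (intro sum_nonpos) (simp add: mult_nonneg_nonneg)
  finally show ?thesis unfolding W_def by simp
qed

lemma weighted_barycenter_pairing:
  fixes P :: "('a::real_inner \<times> 'a) set"
  assumes S: "S = (\<Sum>p\<in>P. v p)" and x: "S *\<^sub>R x = (\<Sum>p\<in>P. v p *\<^sub>R fst p)"
  shows "S * (\<Sum>p\<in>P. v p * inner (x + snd p) (x - fst p))
    = (\<Sum>p\<in>P. \<Sum>q\<in>P. v p * v q * inner (snd p) (fst q - fst p))"
proof -
  have dev: "S *\<^sub>R (x - fst p) = (\<Sum>q\<in>P. v q *\<^sub>R (fst q - fst p))" for p
    using x by (simp add: S scaleR_diff_right scaleR_diff_left scaleR_sum_left sum_subtractf)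
  have "(\<Sum>p\<in>P. v p * inner x (x - fst p)) = inner x (S *\<^sub>R x - (\<Sum>p\<in>P. v p *\<^sub>R fst p))"
    by (simp add: S inner_diff_right inner_sum_right sum_distrib_right sum_subtractf algebra_simps)
  then have "(\<Sum>p\<in>P. v p * inner x (x - fst p)) = 0"
    using x by simp
  then have "(\<Sum>p\<in>P. v p * inner (x + snd p) (x - fst p)) = (\<Sum>p\<in>P. v p * inner (snd p) (x - fst p))"
    by (simp add: inner_add_left distrib_left sum.distrib)
  then have "S * (\<Sum>p\<in>P. v p * inner (x + snd p) (x - fst p)) = S * (\<Sum>p\<in>P. v p * inner (snd p) (x - fst p))"
    by simp
  also have "\<dots> = (\<Sum>p\<in>P. v p * inner (snd p) (S *\<^sub>R (x - fst p)))"
    by (simp add: sum_distrib_left algebra_simps)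
  finally show ?thesis
    unfolding dev by (simp add: inner_sum_right sum_distrib_left algebra_simps)
qed

text \<open>A Brouwer fixed point of the map averaging \<open>x\<close> with the points \<open>a i\<close>, weighted by
  \<open>v i x\<close>.\<close>

lemma brouwer_weighted_barycenter:
  fixes a :: "'i \<Rightarrow> 'a::euclidean_space" and v :: "'i \<Rightarrow> 'a \<Rightarrow> real"
  assumes fin: "finite I" and ne: "I \<noteq> {}"
    and v_nonneg: "\<And>i x. 0 \<le> v i x" and cont_v: "\<And>i. continuous_on UNIV (v i)"
  shows "\<exists>x. (\<Sum>i\<in>I. v i x) *\<^sub>R x = (\<Sum>i\<in>I. v i x *\<^sub>R a i)"
proof -
  define C where "C = convex hull (a ` I)"
  define S where "S = (\<lambda>x. \<Sum>i\<in>I. v i x)"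
  define T where "T = (\<lambda>x. (1 / (1 + S x)) *\<^sub>R (x + (\<Sum>i\<in>I. v i x *\<^sub>R a i)))"
  have S_nonneg: "0 \<le> S x" for x
    unfolding S_def by (simp add: sum_nonneg v_nonneg)
  have cont_S: "continuous_on UNIV S"
    unfolding S_def by (intro continuous_intros cont_v)
  have "continuous_on C T"
    unfolding T_def using S_nonneg
    by (intro continuous_intros continuous_on_subset[OF cont_S] continuous_on_subset[OF cont_v])
      (auto simp: add_nonneg_eq_0_iff)
  moreover have "T \<in> C \<rightarrow> C"
  proof
    fix x assume xC: "x \<in> C"
    show "T x \<in> C"
    proof (cases "S x = 0")
      case True
      then have "\<forall>i\<in>I. v i x = 0"
        unfolding S_def using fin v_nonneg by (simp add: sum_nonneg_eq_0_iff)
      with True have "T x = x"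
        by (simp add: T_def)
      then show ?thesis using xC by simp
    next
      case False
      then have S_pos: "0 < S x" using S_nonneg[of x] by linarith
      have "(\<Sum>i\<in>I. (v i x / S x) *\<^sub>R a i) \<in> C"
        unfolding C_def
      proof (rule convex_sum[OF fin convex_convex_hull])
        show "(\<Sum>i\<in>I. v i x / S x) = 1"
          using S_pos by (simp add: sum_divide_distrib[symmetric] S_def)
      qed (use v_nonneg S_pos in \<open>auto simp: hull_inc\<close>)
      moreover have "T x = (1 / (1 + S x)) *\<^sub>R x + (S x / (1 + S x)) *\<^sub>R (\<Sum>i\<in>I. (v i x / S x) *\<^sub>R a i)"
        unfolding T_def using S_pos by (simp add: scaleR_add_right scaleR_sum_right)
      ultimately show ?thesis
        using convexD[OF convex_convex_hull xC[unfolded C_def]] S_pos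
        by (simp add: C_def add_divide_distrib[symmetric])
    qed
  qed
  ultimately obtain x where fixed: "T x = x"
    using brouwer[of C T] fin ne by (auto simp: C_def finite_imp_compact_convex_hull)
  have "(1 + S x) *\<^sub>R T x = x + (\<Sum>i\<in>I. v i x *\<^sub>R a i)"
    unfolding T_def using S_nonneg[of x] by simp
  then have "(1 + S x) *\<^sub>R x = x + (\<Sum>i\<in>I. v i x *\<^sub>R a i)"
    unfolding fixed .
  then show ?thesis
    unfolding S_def by (auto simp: algebra_simps)
qed

text \<open>At a weighted barycenter of the \<open>a\<close>'s, weighted by their violations, monotonicity forces
  all violations to vanish.\<close>

lemma debrunner_flor_finite:
  fixes P :: "('a::euclidean_space \<times> 'a) set"
  assumes fin: "finite P" and ne: "P \<noteq> {}"
    and mono: "\<And>p q. p \<in> P \<Longrightarrow> q \<in> P \<Longrightarrow> 0 \<le> inner (snd p - snd q) (fst p - fst q)"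
  shows "\<exists>x. \<forall>(a, b)\<in>P. inner (x + b) (x - a) \<le> 0"
proof -
  define v :: "'a \<times> 'a \<Rightarrow> 'a \<Rightarrow> real"
    where "v = (\<lambda>p x. max 0 (inner (x + snd p) (x - fst p)))"
  have v_nonneg: "0 \<le> v p x" for p x
    unfolding v_def by simp
  have "continuous_on UNIV (v p)" for p
    unfolding v_def by (intro continuous_intros)
  then obtain x where barycenter: "(\<Sum>p\<in>P. v p x) *\<^sub>R x = (\<Sum>p\<in>P. v p x *\<^sub>R fst p)"
    using brouwer_weighted_barycenter[OF fin ne, of v fst] v_nonneg by blast
  have "\<forall>p\<in>P. v p x = 0"
  proof (rule ccontr)
    assume "\<not> (\<forall>p\<in>P. v p x = 0)"
    then obtain p0 where p0: "p0 \<in> P" "v p0 x \<noteq> 0"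
      by blast
    have "v p x * inner (x + snd p) (x - fst p) = (v p x)\<^sup>2" for p
      unfolding v_def by (simp add: max_def power2_eq_square)
    then have "0 < (\<Sum>p\<in>P. v p x * inner (x + snd p) (x - fst p))"
      using p0 by (simp add: sum_pos2[OF fin p0(1)])
    moreover have "0 < (\<Sum>p\<in>P. v p x)"
      using p0 v_nonneg[of p0 x] by (intro sum_pos2[OF fin p0(1)]) (auto simp: v_nonneg less_le)
    ultimately have "0 < (\<Sum>p\<in>P. v p x) * (\<Sum>p\<in>P. v p x * inner (x + snd p) (x - fst p))"
      by simp
    also have "\<dots> = (\<Sum>p\<in>P. \<Sum>q\<in>P. v p x * v q x * inner (snd p) (fst q - fst p))"
      by (rule weighted_barycenter_pairing[OF refl barycenter])
    also have "\<dots> \<le> 0"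
      using fin v_nonneg mono by (rule monotone_double_sum_nonpos)
    finally show False by simp
  qed
  then have "\<forall>p\<in>P. inner (x + snd p) (x - fst p) \<le> 0"
    unfolding v_def by (metis max.cobounded2 max_def)
  then show ?thesis by (auto simp: case_prod_beta)
qed

lemma bounded_inner_sublevel:
  fixes a c :: "'a::real_inner"
  shows "bounded {x. inner (x + c) (x - a) \<le> 0}"
proof -
  define m where "m = (1 / 2) *\<^sub>R (a - c)"
  have "inner (x + c) (x - a) = (norm (x - m))\<^sup>2 - (norm (a + c) / 2)\<^sup>2" for x
    unfolding m_def power2_norm_eq_inner power_divide
    by (simp add: inner_add_left inner_add_right inner_diff_left inner_diff_right inner_commute
        algebra_simps power2_eq_square)
  then have "{x. inner (x + c) (x - a) \<le> 0} \<subseteq> cball m (norm (a + c) / 2)"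
    by (auto simp: dist_norm norm_minus_commute power2_le_iff_abs_le)
  then show ?thesis
    using bounded_cball bounded_subset by blast
qed

lemma maximal_monotone_imp_monotone_op: "maximal_monotone A \<Longrightarrow> monotone_op A"
  unfolding maximal_monotone_def by simp

lemma maximal_monotone_graph_nonempty:
  fixes A :: "'a::real_inner \<Rightarrow> 'a set"
  assumes "maximal_monotone A"
  shows "\<exists>x u. u \<in> A x"
proof (rule ccontr)
  assume "\<nexists>x u. u \<in> A x"
  moreover have "monotone_op (\<lambda>_. {0 :: 'a})"
    unfolding monotone_op_def by simp
  ultimately have "(\<lambda>_. {0}) = A"
    using assms unfolding maximal_monotone_def by blast
  with \<open>\<nexists>x u. u \<in> A x\<close> show False by blast
qed

lemma maximal_monotone_memI:
  fixes A :: "'a::real_inner \<Rightarrow> 'a set"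
  assumes mm: "maximal_monotone A"
    and related: "\<And>y v. v \<in> A y \<Longrightarrow> 0 \<le> inner (u - v) (x - y)"
  shows "u \<in> A x"
proof -
  define A' where "A' = (\<lambda>y. A y \<union> (if y = x then {u} else {}))"
  have "monotone_op A'"
    unfolding monotone_op_def
  proof (intro allI impI)
    fix x1 x2 u1 u2 assume "u1 \<in> A' x1" "u2 \<in> A' x2"
    then consider "u1 \<in> A x1" "u2 \<in> A x2" | "u1 \<in> A x1" "x2 = x" "u2 = u"
      | "x1 = x" "u1 = u" "u2 \<in> A x2" | "x1 = x" "u1 = u" "x2 = x" "u2 = u"
      unfolding A'_def by (auto split: if_splits)
    then show "0 \<le> inner (u1 - u2) (x1 - x2)"
    proof cases
      case 1
      then show ?thesis
        using maximal_monotone_imp_monotone_op[OF mm] unfolding monotone_op_def by blast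
    next
      case 2
      then show ?thesis
        using related[of u1 x1] by (simp add: inner_diff_left inner_diff_right)
    qed (use related in simp_all)
  qed
  moreover have "\<forall>y. A y \<subseteq> A' y"
    unfolding A'_def by auto
  ultimately have "A' = A"
    using mm unfolding maximal_monotone_def by blast
  moreover have "u \<in> A' x"
    unfolding A'_def by simp
  ultimately show ?thesis by simp
qed

text \<open>The compact sets of points \<open>x\<close> for which
  \<open>(x, (t - x) / \<tau>)\<close> is monotonically related to a given point of the graph have the finite
  intersection property by the Debrunner--Flor lemma; a common point is related to the whole
  graph, hence lies on it by maximality.\<close>

lemma minty_surjective:
  fixes A :: "'a::euclidean_space \<Rightarrow> 'a set"
  assumes mm: "maximal_monotone A" and tau: "0 < \<tau>"
  shows "\<exists>x. \<exists>u\<in>A x. t = x + \<tau> *\<^sub>R u"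
proof -
  define G where "G = {(a, b). b \<in> A a}"
  define K where "K = (\<lambda>p. {x. inner (x + (\<tau> *\<^sub>R snd p - t)) (x - fst p) \<le> 0})"
  obtain g0 where g0: "g0 \<in> G"
    using maximal_monotone_graph_nonempty[OF mm] unfolding G_def by auto
  have closed_K: "closed (K p)" for p
    unfolding K_def by (intro closed_Collect_le continuous_intros)
  have "compact (K g0)"
    unfolding compact_eq_bounded_closed K_def using closed_K[of g0]
    by (simp add: K_def bounded_inner_sublevel)
  then have "K g0 \<inter> (\<Inter>p\<in>G. K p) \<noteq> {}"
  proof (rule compact_imp_fip_image[OF _ closed_K])
    fix I assume "finite I" "I \<subseteq> G"
    define P where "P = (\<lambda>p. (fst p, \<tau> *\<^sub>R snd p - t)) ` insert g0 I"
    have "0 \<le> inner (snd p - snd q) (fst p - fst q)" if "p \<in> P" "q \<in> P" for p q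
    proof -
      obtain p' where "p' \<in> insert g0 I" and p: "p = (fst p', \<tau> *\<^sub>R snd p' - t)"
        using \<open>p \<in> P\<close> unfolding P_def by (rule imageE)
      obtain q' where "q' \<in> insert g0 I" and q: "q = (fst q', \<tau> *\<^sub>R snd q' - t)"
        using \<open>q \<in> P\<close> unfolding P_def by (rule imageE)
      have "p' \<in> G" "q' \<in> G"
        using \<open>p' \<in> insert g0 I\<close> \<open>q' \<in> insert g0 I\<close> \<open>I \<subseteq> G\<close> g0 by auto
      then have "0 \<le> inner (snd p' - snd q') (fst p' - fst q')"
        using maximal_monotone_imp_monotone_op[OF mm] unfolding monotone_op_def G_def by auto
      then show ?thesis
        using tau unfolding p q by (simp add: scaleR_diff_right[symmetric])
    qed
    moreover have "finite P" "P \<noteq> {}"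
      unfolding P_def using \<open>finite I\<close> by auto
    ultimately obtain x where "\<forall>(a, b)\<in>P. inner (x + b) (x - a) \<le> 0"
      using debrunner_flor_finite[of P] by blast
    then have "x \<in> K g0 \<inter> (\<Inter>p\<in>I. K p)"
      unfolding K_def P_def by auto
    then show "K g0 \<inter> (\<Inter>p\<in>I. K p) \<noteq> {}" by blast
  qed
  then obtain x where xK: "\<And>p. p \<in> G \<Longrightarrow> x \<in> K p" by blast
  define u where "u = (1 / \<tau>) *\<^sub>R (t - x)"
  have "u \<in> A x"
  proof (rule maximal_monotone_memI[OF mm])
    fix y v assume "v \<in> A y"
    then have "inner (x + (\<tau> *\<^sub>R v - t)) (x - y) \<le> 0"
      using xK[of "(y, v)"] unfolding K_def G_def by auto
    moreover have "x + (\<tau> *\<^sub>R v - t) = - \<tau> *\<^sub>R (u - v)"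
      unfolding u_def using tau by (simp add: algebra_simps)
    ultimately show "0 \<le> inner (u - v) (x - y)"
      using tau by (simp add: zero_le_mult_iff)
  qed
  moreover have "t = x + \<tau> *\<^sub>R u"
    unfolding u_def using tau by simp
  ultimately show ?thesis by blast
qed

lemma monotone_op_resolvent_unique:
  assumes mono: "monotone_op A" and tau: "0 < \<tau>"
    and "u1 \<in> A x1" "u2 \<in> A x2" and eq: "x1 + \<tau> *\<^sub>R u1 = x2 + \<tau> *\<^sub>R u2"
  shows "x1 = x2"
proof -
  have "0 \<le> inner (u1 - u2) (x1 - x2)"
    using mono assms unfolding monotone_op_def by blast
  moreover have "x1 - x2 = - \<tau> *\<^sub>R (u1 - u2)"
    using eq by (simp add: algebra_simps)
  then have "inner (x1 - x2) (x1 - x2) = - \<tau> * inner (u1 - u2) (x1 - x2)"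
    using arg_cong[where f="\<lambda>v. inner v (x1 - x2)"] by simp
  ultimately have "inner (x1 - x2) (x1 - x2) \<le> 0"
    using tau by (simp add: mult_nonneg_nonneg)
  then have "inner (x1 - x2) (x1 - x2) = 0"
    using inner_ge_zero[of "x1 - x2"] by linarith
  then show ?thesis by simp
qed

lemma resolvent_eqI:
  assumes "monotone_op A" "0 < \<tau>" "u \<in> A x"
  shows "resolvent \<tau> A (x + \<tau> *\<^sub>R u) = x"
  unfolding resolvent_def
proof (rule the_equality)
  show "x + \<tau> *\<^sub>R u \<in> (\<lambda>u. x + \<tau> *\<^sub>R u) ` A x"
    using assms by blast
  fix x' assume "x + \<tau> *\<^sub>R u \<in> (\<lambda>u. x' + \<tau> *\<^sub>R u) ` A x'"
  then obtain u' where "u' \<in> A x'" "x' + \<tau> *\<^sub>R u' = x + \<tau> *\<^sub>R u" by auto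
  then show "x' = x"
    using monotone_op_resolvent_unique assms by blast
qed

lemma resolvent_decomposition:
  fixes A :: "'a::euclidean_space \<Rightarrow> 'a set"
  assumes mm: "maximal_monotone A" and tau: "0 < \<tau>"
  shows "\<exists>u\<in>A (resolvent \<tau> A t). t = resolvent \<tau> A t + \<tau> *\<^sub>R u"
proof -
  obtain x u where u: "u \<in> A x" and t: "t = x + \<tau> *\<^sub>R u"
    using minty_surjective[OF mm tau] by blast
  have "resolvent \<tau> A t = x"
    unfolding t using resolvent_eqI[OF maximal_monotone_imp_monotone_op[OF mm] tau u] .
  then show ?thesis
    using u t by blast
qed

lemma power2_norm_add:
  fixes x y :: "'a::real_inner"
  shows "(norm (x + y))\<^sup>2 = (norm x)\<^sup>2 + 2 * inner x y + (norm y)\<^sup>2"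
  using dot_norm[of x y] by simp

lemma power2_norm_diff:
  fixes x y :: "'a::real_inner"
  shows "(norm (x - y))\<^sup>2 = (norm x)\<^sup>2 - 2 * inner x y + (norm y)\<^sup>2"
  using dot_norm_neg[of x y] by simp

lemma resolvent_firmly_nonexpansive:
  fixes A :: "'a::euclidean_space \<Rightarrow> 'a set"
  assumes mm: "maximal_monotone A" and tau: "0 < \<tau>"
  defines "J \<equiv> resolvent \<tau> A"
  shows "(norm (J t - J s))\<^sup>2 + (norm ((t - J t) - (s - J s)))\<^sup>2 \<le> (norm (t - s))\<^sup>2"
proof -
  obtain u where u: "u \<in> A (J t)" "t = J t + \<tau> *\<^sub>R u"
    using resolvent_decomposition[OF mm tau] unfolding J_def by blast
  obtain v where v: "v \<in> A (J s)" "s = J s + \<tau> *\<^sub>R v"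
    using resolvent_decomposition[OF mm tau] unfolding J_def by blast
  define dx where "dx = J t - J s"
  define du where "du = \<tau> *\<^sub>R (u - v)"
  have "0 \<le> inner (u - v) dx"
    using maximal_monotone_imp_monotone_op[OF mm] u v unfolding monotone_op_def dx_def by blast
  then have "0 \<le> inner dx du"
    using tau unfolding du_def by (simp add: inner_commute)
  moreover have "t - s = dx + du" "(t - J t) - (s - J s) = du"
    unfolding dx_def du_def using u(2) v(2) by (simp_all add: algebra_simps)
  ultimately have "(norm dx)\<^sup>2 + (norm ((t - J t) - (s - J s)))\<^sup>2 \<le> (norm (t - s))\<^sup>2"
    using power2_norm_add[of dx du] by simp
  then show ?thesis
    unfolding dx_def .
qed

lemma resolvent_nonexpansive:
  fixes A :: "'a::euclidean_space \<Rightarrow> 'a set"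
  assumes "maximal_monotone A" "0 < \<tau>"
  shows "norm (resolvent \<tau> A t - resolvent \<tau> A s) \<le> norm (t - s)"
proof (rule power2_le_imp_le)
  show "(norm (resolvent \<tau> A t - resolvent \<tau> A s))\<^sup>2 \<le> (norm (t - s))\<^sup>2"
    using resolvent_firmly_nonexpansive[OF assms, of t s]
      zero_le_power2[of "norm ((t - resolvent \<tau> A t) - (s - resolvent \<tau> A s))"]
    by linarith
qed simp

lemma resolvent_complement_nonexpansive:
  fixes A :: "'a::euclidean_space \<Rightarrow> 'a set"
  assumes "maximal_monotone A" "0 < \<tau>"
  shows "norm ((t - resolvent \<tau> A t) - (s - resolvent \<tau> A s)) \<le> norm (t - s)"
proof (rule power2_le_imp_le)
  show "(norm ((t - resolvent \<tau> A t) - (s - resolvent \<tau> A s)))\<^sup>2 \<le> (norm (t - s))\<^sup>2"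
    using resolvent_firmly_nonexpansive[OF assms, of t s]
      zero_le_power2[of "norm (resolvent \<tau> A t - resolvent \<tau> A s)"]
    by linarith
qed simp

section \<open>One step of the splitting method, pointwise\<close>

lemma power2_norm_diff_scaleR:
  fixes a b :: "'a::real_inner"
  shows "(norm (a - t *\<^sub>R b))\<^sup>2 = (norm a)\<^sup>2 - 2 * t * inner b a + t\<^sup>2 * (norm b)\<^sup>2"
  using power2_norm_diff[of a "t *\<^sub>R b"] by (simp add: inner_commute power_mult_distrib)

lemma power2_norm_add_le:
  fixes a b :: "'a::real_inner"
  shows "(norm (a + b))\<^sup>2 \<le> 2 * (norm a)\<^sup>2 + 2 * (norm b)\<^sup>2"
  using power2_norm_add[of a b] power2_norm_diff[of a b] zero_le_power2[of "norm (a - b)"]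
  by linarith

lemma power2_norm_diff_le:
  fixes a b :: "'a::real_inner"
  shows "(norm (a - b))\<^sup>2 \<le> 2 * (norm a)\<^sup>2 + 2 * (norm b)\<^sup>2"
  using power2_norm_add_le[of a "- b"] by simp

lemma power2_norm_sum_le:
  fixes v :: "'i \<Rightarrow> 'a::real_normed_vector"
  shows "(norm (\<Sum>i\<in>I. v i))\<^sup>2 \<le> real (card I) * (\<Sum>i\<in>I. (norm (v i))\<^sup>2)"
proof -
  have "(norm (\<Sum>i\<in>I. v i))\<^sup>2 \<le> (\<Sum>i\<in>I. norm (v i))\<^sup>2"
    using norm_sum[of v I] by (simp add: power_mono)
  also have "\<dots> \<le> (\<Sum>i\<in>I. (norm (v i))\<^sup>2) * card I"
    by (rule sum_squared_le_sum_of_squares)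
  finally show ?thesis by (simp add: mult.commute)
qed

lemma sum_power2_norm_deviation_le:
  fixes d :: "'i \<Rightarrow> 'a::real_inner"
  assumes "finite I" and "I \<noteq> {}"
  shows "(\<Sum>i\<in>I. (norm (d i - (1 / real (card I)) *\<^sub>R (\<Sum>j\<in>I. d j)))\<^sup>2) \<le> (\<Sum>i\<in>I. (norm (d i))\<^sup>2)"
proof -
  define c where "c = (1 / real (card I)) *\<^sub>R (\<Sum>j\<in>I. d j)"
  have sum_d: "(\<Sum>j\<in>I. d j) = real (card I) *\<^sub>R c"
    unfolding c_def using assms by simp
  have "(\<Sum>i\<in>I. (norm (d i - c))\<^sup>2) = (\<Sum>i\<in>I. (norm (d i))\<^sup>2 - 2 * inner (d i) c + (norm c)\<^sup>2)"
    by (simp add: power2_norm_diff)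
  also have "\<dots> = (\<Sum>i\<in>I. (norm (d i))\<^sup>2) - 2 * inner (\<Sum>j\<in>I. d j) c + real (card I) * (norm c)\<^sup>2"
    by (simp add: sum.distrib sum_subtractf sum_distrib_left inner_sum_left)
  also have "\<dots> = (\<Sum>i\<in>I. (norm (d i))\<^sup>2) - real (card I) * (norm c)\<^sup>2"
    unfolding sum_d by (simp add: power2_norm_eq_inner)
  finally show ?thesis
    unfolding c_def by simp
qed

lemma ext_dist2_update:
  fixes z s zs :: "'a::real_inner" and w d ws :: "nat \<Rightarrow> 'a"
  shows "ext_dist2 n (z - \<alpha> *\<^sub>R s) (\<lambda>i. w i - \<alpha> *\<^sub>R d i) zs ws
    = ext_dist2 n z w zs ws - 2 * \<alpha> * (inner s (z - zs) + (\<Sum>i=1..n+1. inner (d i) (w i - ws i)))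
      + \<alpha>\<^sup>2 * ((norm s)\<^sup>2 + (\<Sum>i=1..n+1. (norm (d i))\<^sup>2))"
proof -
  have z: "(norm (z - \<alpha> *\<^sub>R s - zs))\<^sup>2
      = (norm (z - zs))\<^sup>2 - 2 * \<alpha> * inner s (z - zs) + \<alpha>\<^sup>2 * (norm s)\<^sup>2"
    using power2_norm_diff_scaleR[of "z - zs" \<alpha> s] by (simp add: algebra_simps)
  have w: "(norm (w i - \<alpha> *\<^sub>R d i - ws i))\<^sup>2
      = (norm (w i - ws i))\<^sup>2 - 2 * \<alpha> * inner (d i) (w i - ws i) + \<alpha>\<^sup>2 * (norm (d i))\<^sup>2" for i
    using power2_norm_diff_scaleR[of "w i - ws i" \<alpha> "d i"] by (simp add: algebra_simps)
  show ?thesis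
    unfolding ext_dist2_def z w
    by (simp add: sum.distrib sum_subtractf sum_distrib_left algebra_simps)
qed

text \<open>With both dual tuples summing to zero, the progress term of the update equals
  \<open>\<phi>(p) - \<phi>(p*)\<close> for the separating affine function \<open>\<phi>\<close>.\<close>

lemma splitting_gap_identity:
  fixes z zs c :: "'a::real_inner" and w ws x y :: "'i \<Rightarrow> 'a"
  assumes sum_w: "(\<Sum>i\<in>I. w i) = 0" and sum_ws: "(\<Sum>i\<in>I. ws i) = 0"
  shows "inner (\<Sum>i\<in>I. y i) (z - zs) + (\<Sum>i\<in>I. inner (x i - c) (w i - ws i))
    = (\<Sum>i\<in>I. inner (z - x i) (y i - w i) - inner (zs - x i) (y i - ws i))"
proof -
  have expand: "inner (z - x i) (y i - w i) - inner (zs - x i) (y i - ws i)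
      = inner (y i) (z - zs) + inner (x i) (w i - ws i) - inner z (w i) + inner zs (ws i)" for i
    by (simp add: inner_diff_left inner_diff_right inner_commute algebra_simps)
  have "(\<Sum>i\<in>I. inner (x i - c) (w i - ws i))
      = (\<Sum>i\<in>I. inner (x i) (w i - ws i)) - inner c (\<Sum>i\<in>I. w i - ws i)"
    by (simp add: inner_diff_left inner_diff_right sum_subtractf inner_sum_right)
  also have "(\<Sum>i\<in>I. w i - ws i) = 0"
    using sum_w sum_ws by (simp add: sum_subtractf)
  finally have "(\<Sum>i\<in>I. inner (x i - c) (w i - ws i)) = (\<Sum>i\<in>I. inner (x i) (w i - ws i))"
    by simp
  moreover have "(\<Sum>i\<in>I. inner z (w i)) = 0" "(\<Sum>i\<in>I. inner zs (ws i)) = 0"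
    using sum_w sum_ws by (simp_all add: inner_sum_right[symmetric])
  ultimately show ?thesis
    unfolding expand by (simp add: sum.distrib sum_subtractf inner_sum_left)
qed

lemma resolvent_step_gap:
  fixes z x y w zs ws :: "'a::real_inner"
  assumes step: "z + \<tau> *\<^sub>R w = x + \<tau> *\<^sub>R y" and mono: "0 \<le> inner (y - ws) (x - zs)"
  shows "\<tau> * (norm (y - w))\<^sup>2 \<le> inner (z - x) (y - w) - inner (zs - x) (y - ws)"
proof -
  have "z - x = \<tau> *\<^sub>R (y - w)"
    using step by (simp add: algebra_simps)
  then have "inner (z - x) (y - w) = \<tau> * (norm (y - w))\<^sup>2"
    by (simp add: power2_norm_eq_inner)
  moreover have "- inner (zs - x) (y - ws) = inner (y - ws) (x - zs)"
    by (simp add: inner_diff_left inner_diff_right inner_commute)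
  ultimately show ?thesis
    using mono by linarith
qed

lemma forward_step_gap:
  fixes B :: "'a::real_inner \<Rightarrow> 'a"
  assumes x: "x = z - \<rho> *\<^sub>R ((B z + \<epsilon>) - w)" and y: "y = B x + e"
    and mono: "0 \<le> inner (B x - B zs) (x - zs)"
    and lip: "norm (B x - B z) \<le> L * norm (x - z)" and rho: "0 \<le> \<rho>"
  shows "\<rho> * (1 - L * \<rho>) * (norm (B z - w))\<^sup>2 + \<rho> * (1 - 2 * L * \<rho>) * inner \<epsilon> (B z - w)
      - L * \<rho>\<^sup>2 * (norm \<epsilon>)\<^sup>2 + inner (z - zs) e
    \<le> inner (z - x) (y - w) - inner (zs - x) (y - B zs)"
proof -
  define \<Gamma> where "\<Gamma> = B z - w"
  define g where "g = \<Gamma> + \<epsilon>"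
  define V where "V = B x - B z"
  have zx: "z - x = \<rho> *\<^sub>R g"
    unfolding g_def \<Gamma>_def x by (simp add: algebra_simps)
  have "y - w = \<Gamma> + V + e" "y - B zs = (B x - B zs) + e"
    unfolding y \<Gamma>_def V_def by (simp_all add: algebra_simps)
  then have "inner (z - x) (y - w) = \<rho> * inner g \<Gamma> + \<rho> * inner g V + inner (z - x) e"
    and "inner (zs - x) (y - B zs) = inner (zs - x) (B x - B zs) + inner (zs - x) e"
    by (simp_all only: inner_add_right) (simp add: zx)
  moreover have "inner (z - x) e - inner (zs - x) e = inner (z - zs) e"
    by (simp add: inner_diff_left)
  moreover have "inner (zs - x) (B x - B zs) = - inner (B x - B zs) (x - zs)"
    by (simp add: inner_diff_left inner_diff_right inner_commute)
  ultimately have gap: "inner (z - x) (y - w) - inner (zs - x) (y - B zs)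
      = \<rho> * inner g \<Gamma> + \<rho> * inner g V + inner (z - zs) e + inner (B x - B zs) (x - zs)"
    by linarith
  moreover have "- (L * \<rho> * (norm g)\<^sup>2) \<le> inner g V"
  proof -
    have "norm (x - z) = \<rho> * norm g"
      using zx rho by (metis norm_minus_commute norm_scaleR abs_of_nonneg)
    then have "norm V \<le> L * (\<rho> * norm g)"
      using lip unfolding V_def by simp
    then have "norm g * norm V \<le> norm g * (L * (\<rho> * norm g))"
      by (simp add: mult_left_mono)
    then have "norm g * norm V \<le> L * \<rho> * (norm g)\<^sup>2"
      by (simp add: power2_eq_square algebra_simps)
    moreover have "- inner g V \<le> norm g * norm V"
      using Cauchy_Schwarz_ineq2[of g V] by linarith
    ultimately show ?thesis by linarith
  qed
  then have "\<rho> * (- (L * \<rho> * (norm g)\<^sup>2)) \<le> \<rho> * inner g V"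
    using rho by (rule mult_left_mono)
  then have "- (L * \<rho>\<^sup>2 * (norm g)\<^sup>2) \<le> \<rho> * inner g V"
    by (simp add: power2_eq_square algebra_simps)
  moreover have "(norm g)\<^sup>2 = (norm \<Gamma>)\<^sup>2 + 2 * inner \<Gamma> \<epsilon> + (norm \<epsilon>)\<^sup>2"
    unfolding g_def by (rule power2_norm_add)
  moreover have "inner g \<Gamma> = (norm \<Gamma>)\<^sup>2 + inner \<epsilon> \<Gamma>"
    unfolding g_def by (simp add: power2_norm_eq_inner inner_add_left)
  ultimately show ?thesis
    using mono unfolding gap \<Gamma>_def[symmetric]
    by (simp add: inner_commute algebra_simps power2_eq_square)
qed

lemma splitting_direction_bound:
  fixes B :: "'a::real_inner \<Rightarrow> 'a" and w x y :: "nat \<Rightarrow> 'a"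
  assumes sum_w: "(\<Sum>i=1..n+1. w i) = 0"
    and step: "\<And>i. i \<in> {1..n} \<Longrightarrow> z + \<tau> *\<^sub>R w i = x i + \<tau> *\<^sub>R y i"
    and x: "x (n+1) = z - \<rho> *\<^sub>R ((B z + \<epsilon>) - w (n+1))" and y: "y (n+1) = B (x (n+1)) + e"
    and lip: "norm (B (x (n+1)) - B z) \<le> L * norm (x (n+1) - z)" and rho: "0 \<le> \<rho>"
  shows "(norm (\<Sum>i=1..n+1. y i))\<^sup>2
      + (\<Sum>i=1..n+1. (norm (x i - (1 / real (n+1)) *\<^sub>R (\<Sum>j=1..n+1. x j)))\<^sup>2)
    \<le> 2 * (norm ((\<Sum>i=1..n. y i - w i) + (B z - w (n+1))))\<^sup>2
      + (4 * L\<^sup>2 + 1) * \<rho>\<^sup>2 * (norm (B z - w (n+1) + \<epsilon>))\<^sup>2 + 4 * (norm e)\<^sup>2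
      + \<tau>\<^sup>2 * (\<Sum>i=1..n. (norm (y i - w i))\<^sup>2)"
proof -
  define g where "g = B z - w (n+1) + \<epsilon>"
  define V where "V = B (x (n+1)) - B z"
  have zx: "z - x (n+1) = \<rho> *\<^sub>R g"
    unfolding g_def x by (simp add: algebra_simps)
  then have norm_zx: "norm (x (n+1) - z) = \<rho> * norm g"
    using rho by (metis norm_minus_commute norm_scaleR abs_of_nonneg)
  have "(\<Sum>i=1..n+1. y i) = (\<Sum>i=1..n+1. y i - w i)"
    using sum_w by (simp add: sum_subtractf)
  also have "\<dots> = ((\<Sum>i=1..n. y i - w i) + (B z - w (n+1))) + (V + e)"
    using y by (simp add: V_def algebra_simps)
  finally have "(norm (\<Sum>i=1..n+1. y i))\<^sup>2
      \<le> 2 * (norm ((\<Sum>i=1..n. y i - w i) + (B z - w (n+1))))\<^sup>2 + 2 * (norm (V + e))\<^sup>2"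
    using power2_norm_add_le by metis
  moreover have "(norm (V + e))\<^sup>2 \<le> 2 * (norm V)\<^sup>2 + 2 * (norm e)\<^sup>2"
    by (rule power2_norm_add_le)
  moreover have "(norm V)\<^sup>2 \<le> L\<^sup>2 * \<rho>\<^sup>2 * (norm g)\<^sup>2"
    using power_mono[OF lip[unfolded norm_zx] norm_ge_zero, of 2]
    unfolding V_def by (simp add: power_mult_distrib)
  moreover have "(\<Sum>i=1..n+1. (norm (x i - (1 / real (n+1)) *\<^sub>R (\<Sum>j=1..n+1. x j)))\<^sup>2)
      \<le> \<tau>\<^sup>2 * (\<Sum>i=1..n. (norm (y i - w i))\<^sup>2) + \<rho>\<^sup>2 * (norm g)\<^sup>2"
  proof -
    define m where "m = (1 / real (n+1)) *\<^sub>R (\<Sum>j=1..n+1. x j)"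
    have "(1 / real (card {1..n+1})) *\<^sub>R (\<Sum>j=1..n+1. x j - z) = m - z"
      unfolding m_def
      by (simp only: sum_subtractf sum_constant_scaleR scaleR_diff_right card_atLeastAtMost) simp
    then have "x i - m = (x i - z) - (1 / real (card {1..n+1})) *\<^sub>R (\<Sum>j=1..n+1. x j - z)" for i
      by simp
    then have "(\<Sum>i=1..n+1. (norm (x i - m))\<^sup>2)
        = (\<Sum>i=1..n+1. (norm ((x i - z) - (1 / real (card {1..n+1})) *\<^sub>R (\<Sum>j=1..n+1. x j - z)))\<^sup>2)"
      by presburger
    also have "\<dots> \<le> (\<Sum>i=1..n+1. (norm (x i - z))\<^sup>2)"
      by (rule sum_power2_norm_deviation_le) auto
    also have "\<dots> = (\<Sum>i=1..n. (norm (z - x i))\<^sup>2) + (norm (z - x (n+1)))\<^sup>2"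
      by (simp add: norm_minus_commute)
    also have "(\<Sum>i=1..n. (norm (z - x i))\<^sup>2) = \<tau>\<^sup>2 * (\<Sum>i=1..n. (norm (y i - w i))\<^sup>2)"
      unfolding sum_distrib_left
    proof (rule sum.cong[OF refl])
      fix i assume "i \<in> {1..n}"
      then have "z - x i = \<tau> *\<^sub>R (y i - w i)"
        using step by (simp add: algebra_simps)
      then show "(norm (z - x i))\<^sup>2 = \<tau>\<^sup>2 * (norm (y i - w i))\<^sup>2"
        by (simp add: power_mult_distrib)
    qed
    also have "(norm (z - x (n+1)))\<^sup>2 = \<rho>\<^sup>2 * (norm g)\<^sup>2"
      using norm_zx by (simp add: norm_minus_commute power_mult_distrib)
    finally show ?thesis
      unfolding m_def .
  qed
  ultimately show ?thesis
    unfolding g_def by (simp add: algebra_simps)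
qed

lemma splitting_step_pointwise:
  fixes B :: "'a::real_inner \<Rightarrow> 'a" and w ws x y :: "nat \<Rightarrow> 'a"
  assumes sum_w: "(\<Sum>i=1..n+1. w i) = 0" and sum_ws: "(\<Sum>i=1..n+1. ws i) = 0"
    and ws_B: "ws (n+1) = B zs"
    and step: "\<And>i. i \<in> {1..n} \<Longrightarrow> z + \<tau> *\<^sub>R w i = x i + \<tau> *\<^sub>R y i"
    and mono: "\<And>i. i \<in> {1..n} \<Longrightarrow> 0 \<le> inner (y i - ws i) (x i - zs)"
    and x: "x (n+1) = z - \<rho> *\<^sub>R ((B z + \<epsilon>) - w (n+1))" and y: "y (n+1) = B (x (n+1)) + e"
    and B_mono: "0 \<le> inner (B (x (n+1)) - B zs) (x (n+1) - zs)"
    and lip: "norm (B (x (n+1)) - B z) \<le> L * norm (x (n+1) - z)"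
    and alpha: "0 \<le> \<alpha>" and rho: "0 \<le> \<rho>"
  shows "ext_dist2 n (z - \<alpha> *\<^sub>R (\<Sum>i=1..n+1. y i))
            (\<lambda>i. w i - \<alpha> *\<^sub>R (x i - (1 / real (n+1)) *\<^sub>R (\<Sum>j=1..n+1. x j))) zs ws
   \<le> ext_dist2 n z w zs ws - 2 * \<alpha> * \<tau> * (\<Sum>i=1..n. (norm (y i - w i))\<^sup>2)
      - 2 * \<alpha> * \<rho> * (1 - L * \<rho>) * (norm (B z - w (n+1)))\<^sup>2
      + \<alpha>\<^sup>2 * (2 * (norm ((\<Sum>i=1..n. y i - w i) + (B z - w (n+1))))\<^sup>2
               + \<tau>\<^sup>2 * (\<Sum>i=1..n. (norm (y i - w i))\<^sup>2)
               + (4 * L\<^sup>2 + 1) * \<rho>\<^sup>2 * (norm (B z - w (n+1)))\<^sup>2)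
      + inner \<epsilon> ((- 2 * \<alpha> * \<rho> * (1 - 2 * L * \<rho>) + 2 * \<alpha>\<^sup>2 * (4 * L\<^sup>2 + 1) * \<rho>\<^sup>2) *\<^sub>R (B z - w (n+1)))
      + (2 * \<alpha> * L * \<rho>\<^sup>2 + \<alpha>\<^sup>2 * (4 * L\<^sup>2 + 1) * \<rho>\<^sup>2) * (norm \<epsilon>)\<^sup>2
      + inner e ((- 2 * \<alpha>) *\<^sub>R (z - zs)) + 4 * \<alpha>\<^sup>2 * (norm e)\<^sup>2"
proof -
  define xb where "xb = (1 / real (n+1)) *\<^sub>R (\<Sum>j=1..n+1. x j)"
  define \<Gamma> where "\<Gamma> = B z - w (n+1)"
  define SY where "SY = (\<Sum>i=1..n. (norm (y i - w i))\<^sup>2)"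
  define V1 where "V1 = (\<Sum>i=1..n. y i - w i) + \<Gamma>"
  define gap where "gap = (\<lambda>i. inner (z - x i) (y i - w i) - inner (zs - x i) (y i - ws i))"
  define \<Phi> where "\<Phi> = inner (\<Sum>i=1..n+1. y i) (z - zs) + (\<Sum>i=1..n+1. inner (x i - xb) (w i - ws i))"
  define G where "G = (norm (\<Sum>i=1..n+1. y i))\<^sup>2 + (\<Sum>i=1..n+1. (norm (x i - xb))\<^sup>2)"
  have "\<Phi> = (\<Sum>i=1..n+1. gap i)"
    unfolding \<Phi>_def gap_def by (rule splitting_gap_identity[OF sum_w sum_ws])
  also have "\<dots> = (\<Sum>i=1..n. gap i) + gap (n+1)"
    by simp
  finally have \<Phi>_split: "\<Phi> = (\<Sum>i=1..n. gap i) + gap (n+1)" .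
  have "\<tau> * SY \<le> (\<Sum>i=1..n. gap i)"
    unfolding SY_def gap_def sum_distrib_left
    by (intro sum_mono resolvent_step_gap step mono)
  moreover have "\<rho> * (1 - L * \<rho>) * (norm \<Gamma>)\<^sup>2 + \<rho> * (1 - 2 * L * \<rho>) * inner \<epsilon> \<Gamma>
      - L * \<rho>\<^sup>2 * (norm \<epsilon>)\<^sup>2 + inner (z - zs) e \<le> gap (n+1)"
    unfolding gap_def \<Gamma>_def ws_B by (rule forward_step_gap[OF x y B_mono lip rho])
  ultimately have \<Phi>_low: "\<tau> * SY + (\<rho> * (1 - L * \<rho>) * (norm \<Gamma>)\<^sup>2
      + \<rho> * (1 - 2 * L * \<rho>) * inner \<epsilon> \<Gamma> - L * \<rho>\<^sup>2 * (norm \<epsilon>)\<^sup>2 + inner (z - zs) e) \<le> \<Phi>"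
    unfolding \<Phi>_split by linarith
  have G_up: "G \<le> 2 * (norm V1)\<^sup>2 + (4 * L\<^sup>2 + 1) * \<rho>\<^sup>2 * (norm (\<Gamma> + \<epsilon>))\<^sup>2 + 4 * (norm e)\<^sup>2 + \<tau>\<^sup>2 * SY"
    unfolding G_def V1_def \<Gamma>_def SY_def xb_def
    by (rule splitting_direction_bound[OF sum_w step x y lip rho])
  have "ext_dist2 n (z - \<alpha> *\<^sub>R (\<Sum>i=1..n+1. y i)) (\<lambda>i. w i - \<alpha> *\<^sub>R (x i - xb)) zs ws
      = ext_dist2 n z w zs ws - 2 * \<alpha> * \<Phi> + \<alpha>\<^sup>2 * G"
    unfolding \<Phi>_def G_def by (rule ext_dist2_update)
  also have "\<dots> \<le> ext_dist2 n z w zs ws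
      - 2 * \<alpha> * (\<tau> * SY + (\<rho> * (1 - L * \<rho>) * (norm \<Gamma>)\<^sup>2 + \<rho> * (1 - 2 * L * \<rho>) * inner \<epsilon> \<Gamma>
        - L * \<rho>\<^sup>2 * (norm \<epsilon>)\<^sup>2 + inner (z - zs) e))
      + \<alpha>\<^sup>2 * (2 * (norm V1)\<^sup>2 + (4 * L\<^sup>2 + 1) * \<rho>\<^sup>2 * (norm (\<Gamma> + \<epsilon>))\<^sup>2 + 4 * (norm e)\<^sup>2 + \<tau>\<^sup>2 * SY)"
    using mult_left_mono[OF \<Phi>_low, of "2 * \<alpha>"] mult_left_mono[OF G_up, of "\<alpha>\<^sup>2"] alpha
    by simp
  also have "\<dots> = ext_dist2 n z w zs ws - 2 * \<alpha> * \<tau> * SY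
      - 2 * \<alpha> * \<rho> * (1 - L * \<rho>) * (norm \<Gamma>)\<^sup>2
      + \<alpha>\<^sup>2 * (2 * (norm V1)\<^sup>2 + \<tau>\<^sup>2 * SY + (4 * L\<^sup>2 + 1) * \<rho>\<^sup>2 * (norm \<Gamma>)\<^sup>2)
      + inner \<epsilon> ((- 2 * \<alpha> * \<rho> * (1 - 2 * L * \<rho>) + 2 * \<alpha>\<^sup>2 * (4 * L\<^sup>2 + 1) * \<rho>\<^sup>2) *\<^sub>R \<Gamma>)
      + (2 * \<alpha> * L * \<rho>\<^sup>2 + \<alpha>\<^sup>2 * (4 * L\<^sup>2 + 1) * \<rho>\<^sup>2) * (norm \<epsilon>)\<^sup>2
      + inner e ((- 2 * \<alpha>) *\<^sub>R (z - zs)) + 4 * \<alpha>\<^sup>2 * (norm e)\<^sup>2"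
    unfolding power2_norm_add by (simp add: inner_commute algebra_simps power2_eq_square)
  finally show ?thesis
    unfolding xb_def \<Gamma>_def SY_def V1_def .
qed

section \<open>Conditional expectations of noisy quadratic bounds\<close>

lemma ennreal_integral_le_nn_integral:
  fixes f :: "'m \<Rightarrow> real"
  assumes "integrable M f"
  shows "ennreal (\<integral>x. f x \<partial>M) \<le> (\<integral>\<^sup>+x. ennreal (f x) \<partial>M)"
proof -
  have int_pos: "integrable M (\<lambda>x. max 0 (f x))"
    using assms by auto
  have "ennreal (\<integral>x. f x \<partial>M) \<le> ennreal (\<integral>x. max 0 (f x) \<partial>M)"
    by (intro ennreal_leI integral_mono[OF assms int_pos]) simp
  also have "\<dots> = (\<integral>\<^sup>+x. ennreal (max 0 (f x)) \<partial>M)"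
    by (rule nn_integral_eq_integral[OF int_pos, symmetric]) simp
  also have "\<dots> = (\<integral>\<^sup>+x. ennreal (f x) \<partial>M)"
    by (intro nn_integral_cong) (simp add: max_def ennreal_neg)
  finally show ?thesis .
qed

text \<open>The variable \<open>b\<close> localises the test sets: comparing integrals only over sets where
  \<open>b\<close> is bounded is enough, which lets unbounded coefficients be handled by truncation.\<close>

lemma nn_cond_exp_le_of_local_integrals:
  fixes f :: "'m \<Rightarrow> ennreal" and h b :: "'m \<Rightarrow> real"
  assumes "prob_space M" and sub: "subalgebra M F"
    and [measurable]: "f \<in> borel_measurable M" "h \<in> borel_measurable F" "b \<in> borel_measurable F"
    and le: "\<And>A j. A \<in> sets F \<Longrightarrow> A \<subseteq> {x. b x \<le> real j} \<Longrightarrow>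
      (\<integral>\<^sup>+x. indicator A x * f x \<partial>M) \<le> (\<integral>\<^sup>+x. indicator A x * ennreal (h x) \<partial>M)"
  shows "AE x in M. nn_cond_exp M F f x \<le> ennreal (h x)"
proof -
  interpret prob_space M by fact
  interpret finite_measure_subalgebra M F
    by unfold_locales (rule sub)
  define g where "g = nn_cond_exp M F f"
  define E where "E j = {x\<in>space M. ennreal (h x) < g x \<and> h x \<le> real j \<and> b x \<le> real j}" for j :: nat
  have [measurable]: "g \<in> borel_measurable F"
    unfolding g_def by simp
  have [measurable]: "g \<in> borel_measurable M" "h \<in> borel_measurable M"
    by (simp_all add: g_def measurable_from_subalg[OF sub])
  have E_F: "E j \<in> sets F" for j
  proof -
    have "E j = {x\<in>space F. ennreal (h x) < g x \<and> h x \<le> real j \<and> b x \<le> real j}"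
      using sub unfolding E_def subalgebra_def by simp
    also have "\<dots> \<in> sets F" by measurable
    finally show ?thesis .
  qed
  then have [measurable]: "E j \<in> sets M" for j
    using sub unfolding subalgebra_def by blast
  have "E j \<in> null_sets M" for j
  proof (rule ccontr)
    assume not_null: "E j \<notin> null_sets M"
    have "(\<integral>\<^sup>+x. indicator (E j) x * ennreal (h x) \<partial>M) \<le> (\<integral>\<^sup>+x. ennreal (real j) \<partial>M)"
      by (rule nn_integral_mono) (auto simp: E_def split: split_indicator)
    also have "\<dots> < \<infinity>"
      by (simp add: emeasure_space_1)
    finally have finite: "(\<integral>\<^sup>+x. indicator (E j) x * ennreal (h x) \<partial>M) \<noteq> \<infinity>"
      by simp
    have "(\<integral>\<^sup>+x. indicator (E j) x * ennreal (h x) \<partial>M) < (\<integral>\<^sup>+x. indicator (E j) x * g x \<partial>M)"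
    proof (rule nn_integral_less)
      show "AE x in M. indicator (E j) x * ennreal (h x) \<le> indicator (E j) x * g x"
        by (auto simp: E_def split: split_indicator)
      show "\<not> (AE x in M. indicator (E j) x * g x \<le> indicator (E j) x * ennreal (h x))"
      proof
        assume "AE x in M. indicator (E j) x * g x \<le> indicator (E j) x * ennreal (h x)"
        then have "AE x in M. x \<notin> E j"
          by eventually_elim (auto simp: E_def split: split_indicator)
        then show False
          using not_null by (simp add: AE_iff_null_sets)
      qed
    next
      show "(\<lambda>x. indicator (E j) x * ennreal (h x)) \<in> borel_measurable M"
        "(\<lambda>x. indicator (E j) x * g x) \<in> borel_measurable M"
        by measurable
    qed (use finite in simp_all)
    also have "\<dots> = (\<integral>\<^sup>+x. indicator (E j) x * f x \<partial>M)"
      unfolding g_def by (rule nn_cond_exp_intg) (use E_F in simp_all)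
    also have "\<dots> \<le> (\<integral>\<^sup>+x. indicator (E j) x * ennreal (h x) \<partial>M)"
      by (rule le[OF E_F]) (auto simp: E_def)
    finally show False by simp
  qed
  then have "AE x in M. \<forall>j. x \<notin> E j"
    by (subst AE_all_countable) (blast intro: AE_not_in)
  then show ?thesis
  proof (rule AE_mp[OF _ AE_I2], intro impI)
    fix x assume "x \<in> space M" "\<forall>j. x \<notin> E j"
    moreover obtain j :: nat where "max (h x) (b x) \<le> real j"
      using real_arch_simple by blast
    ultimately show "nn_cond_exp M F f x \<le> ennreal (h x)"
      unfolding E_def g_def by (auto simp: not_less)
  qed
qed

lemma integral_indicator_le_of_nn_cond_exp_le:
  fixes f g :: "'m \<Rightarrow> real"
  assumes "prob_space M" and sub: "subalgebra M F"
    and [measurable]: "f \<in> borel_measurable M" and C: "C \<in> sets F"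
    and f_nonneg: "\<And>x. 0 \<le> f x" and g_nonneg: "\<And>x. 0 \<le> g x"
    and int_g: "integrable M (\<lambda>x. indicator C x * g x)"
    and le: "AE x in M. nn_cond_exp M F (\<lambda>x. ennreal (f x)) x \<le> ennreal (g x)"
  shows "integrable M (\<lambda>x. indicator C x * f x)"
    and "(\<integral>x. indicator C x * f x \<partial>M) \<le> (\<integral>x. indicator C x * g x \<partial>M)"
proof -
  interpret prob_space M by fact
  interpret finite_measure_subalgebra M F
    by unfold_locales (rule sub)
  have [measurable]: "C \<in> sets F" "C \<in> sets M"
    using C sub unfolding subalgebra_def by blast+
  have "(\<integral>\<^sup>+x. ennreal (indicator C x * f x) \<partial>M) = (\<integral>\<^sup>+x. indicator C x * ennreal (f x) \<partial>M)"
    by (intro nn_integral_cong) (simp split: split_indicator)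
  also have "\<dots> = (\<integral>\<^sup>+x. indicator C x * nn_cond_exp M F (\<lambda>x. ennreal (f x)) x \<partial>M)"
    by (rule nn_cond_exp_intg[symmetric]) measurable
  also have "\<dots> \<le> (\<integral>\<^sup>+x. ennreal (indicator C x * g x) \<partial>M)"
    using le by (intro nn_integral_mono_AE) (auto split: split_indicator)
  also have "\<dots> = ennreal (\<integral>x. indicator C x * g x \<partial>M)"
    by (rule nn_integral_eq_integral[OF int_g]) (simp add: g_nonneg)
  finally have le_nn: "(\<integral>\<^sup>+x. ennreal (indicator C x * f x) \<partial>M) \<le> ennreal (\<integral>x. indicator C x * g x \<partial>M)" .
  then show int_f: "integrable M (\<lambda>x. indicator C x * f x)"
    by (intro integrableI_bounded) (auto simp: f_nonneg top.not_eq_extremum intro: le_less_trans)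
  have "ennreal (\<integral>x. indicator C x * f x \<partial>M) \<le> ennreal (\<integral>x. indicator C x * g x \<partial>M)"
    using le_nn by (subst nn_integral_eq_integral[OF int_f, symmetric]) (simp_all add: f_nonneg)
  moreover have "0 \<le> (\<integral>x. indicator C x * g x \<partial>M)"
    by (simp add: g_nonneg)
  ultimately show "(\<integral>x. indicator C x * f x \<partial>M) \<le> (\<integral>x. indicator C x * g x \<partial>M)"
    by (simp add: ennreal_le_iff)
qed

lemma integral_inner_cond_exp_zero:
  fixes X W :: "'m \<Rightarrow> 'a::euclidean_space"
  assumes "prob_space M" and sub: "subalgebra M F"
    and int_X: "integrable M X" and [measurable]: "X \<in> borel_measurable M" "W \<in> borel_measurable F"
    and W_bounded: "\<And>x. norm (W x) \<le> j"
    and mean_zero: "AE x in M. \<forall>b\<in>Basis. real_cond_exp M F (\<lambda>x. inner (X x) b) x = 0"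
  shows "integrable M (\<lambda>x. inner (X x) (W x))" and "(\<integral>x. inner (X x) (W x) \<partial>M) = 0"
proof -
  interpret prob_space M by fact
  interpret finite_measure_subalgebra M F
    by unfold_locales (rule sub)
  have [measurable]: "W \<in> borel_measurable M"
    by (rule measurable_from_subalg[OF sub]) simp
  have int: "integrable M (\<lambda>x. inner (W x) b * inner (X x) b)" if "b \<in> Basis" for b
  proof (rule Bochner_Integration.integrable_bound[where f="\<lambda>x. j * norm (X x)"])
    show "integrable M (\<lambda>x. j * norm (X x))"
      using int_X by simp
    have "0 \<le> j"
      using W_bounded norm_ge_zero order_trans by blast
    have "norm (inner (W x) b * inner (X x) b) \<le> norm (j * norm (X x))" for x
    proof -
      have "\<bar>inner (W x) b\<bar> * \<bar>inner (X x) b\<bar> \<le> j * norm (X x)"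
        using W_bounded[of x] Basis_le_norm[OF that] \<open>0 \<le> j\<close>
        by (intro mult_mono) (auto intro: order_trans)
      then show ?thesis
        using \<open>0 \<le> j\<close> by (simp add: abs_mult)
    qed
    then show "AE x in M. norm (inner (W x) b * inner (X x) b) \<le> norm (j * norm (X x))"
      by simp
  qed measurable
  have zero: "(\<integral>x. inner (W x) b * inner (X x) b \<partial>M) = 0" if b: "b \<in> Basis" for b
  proof -
    have "(\<integral>x. inner (W x) b * inner (X x) b \<partial>M)
        = (\<integral>x. inner (W x) b * real_cond_exp M F (\<lambda>x. inner (X x) b) x \<partial>M)"
      by (rule real_cond_exp_intg(2)[symmetric]) (use int[OF b] in simp_all)
    also have "\<dots> = (\<integral>x. 0 \<partial>M)"
      by (rule integral_cong_AE) (use mean_zero b in auto)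
    finally show ?thesis by simp
  qed
  have expand: "inner (X x) (W x) = (\<Sum>b\<in>Basis. inner (W x) b * inner (X x) b)" for x
    by (subst euclidean_inner) (simp add: mult.commute)
  show "integrable M (\<lambda>x. inner (X x) (W x))"
    unfolding expand using int by auto
  show "(\<integral>x. inner (X x) (W x) \<partial>M) = 0"
    unfolding expand using int zero by simp
qed

text \<open>The variance of \<open>e\<close> is only controlled conditionally on \<open>FE\<close>; this suffices because the
  test sets of \<open>F\<close> are also sets of \<open>FE\<close>.\<close>

locale noisy_quadratic_bound =
  fixes M F FE :: "'m measure" and Q P Sb R1 :: "'m \<Rightarrow> real"
    and V U \<epsilon> e :: "'m \<Rightarrow> 'a::euclidean_space" and R2 cs ce :: real
  assumes prob: "prob_space M" and sub_F: "subalgebra M F" and sub_FE: "subalgebra M FE"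
    and F_FE: "sets F \<subseteq> sets FE"
    and meas: "Q \<in> borel_measurable M" "\<epsilon> \<in> borel_measurable M" "e \<in> borel_measurable M"
      "P \<in> borel_measurable F" "V \<in> borel_measurable F" "U \<in> borel_measurable F"
      "Sb \<in> borel_measurable F" "R1 \<in> borel_measurable F"
    and int_\<epsilon>: "integrable M \<epsilon>" and int_e: "integrable M e"
    and mean_\<epsilon>: "AE x in M. \<forall>b\<in>Basis. real_cond_exp M F (\<lambda>x. inner (\<epsilon> x) b) x = 0"
    and mean_e: "AE x in M. \<forall>b\<in>Basis. real_cond_exp M F (\<lambda>x. inner (e x) b) x = 0"
    and var_\<epsilon>: "AE x in M. nn_cond_exp M F (\<lambda>x. ennreal ((norm (\<epsilon> x))\<^sup>2)) x \<le> ennreal (Sb x)"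
    and var_e: "AE x in M. nn_cond_exp M FE (\<lambda>x. ennreal ((norm (e x))\<^sup>2)) x
      \<le> ennreal (R1 x + R2 * (norm (\<epsilon> x))\<^sup>2)"
    and nonneg: "0 \<le> R2" "0 \<le> cs" "0 \<le> ce" "\<And>x. 0 \<le> Sb x" "\<And>x. 0 \<le> R1 x" "\<And>x. 0 \<le> Q x"
    and Q_le: "\<And>x. Q x \<le> P x + inner (\<epsilon> x) (V x) + cs * (norm (\<epsilon> x))\<^sup>2
      + inner (e x) (U x) + ce * (norm (e x))\<^sup>2"
begin

declare meas [measurable]

lemma measurable_M [measurable]:
  "P \<in> borel_measurable M" "V \<in> borel_measurable M" "U \<in> borel_measurable M"
  "Sb \<in> borel_measurable M" "R1 \<in> borel_measurable M"
  by (simp_all add: measurable_from_subalg[OF sub_F])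

lemma set_second_moments_le:
  assumes C_F: "C \<in> sets F"
    and int_Sb: "integrable M (\<lambda>x. indicator C x * Sb x)"
    and int_R1: "integrable M (\<lambda>x. indicator C x * R1 x)"
  shows "integrable M (\<lambda>x. indicator C x * (norm (\<epsilon> x))\<^sup>2)"
    and "(\<integral>x. indicator C x * (norm (\<epsilon> x))\<^sup>2 \<partial>M) \<le> (\<integral>x. indicator C x * Sb x \<partial>M)"
    and "integrable M (\<lambda>x. indicator C x * (norm (e x))\<^sup>2)"
    and "(\<integral>x. indicator C x * (norm (e x))\<^sup>2 \<partial>M)
      \<le> (\<integral>x. indicator C x * R1 x \<partial>M) + R2 * (\<integral>x. indicator C x * Sb x \<partial>M)"
proof -
  have "C \<in> sets FE"
    using C_F F_FE by blast
  show int_\<epsilon>: "integrable M (\<lambda>x. indicator C x * (norm (\<epsilon> x))\<^sup>2)"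
    and le_\<epsilon>: "(\<integral>x. indicator C x * (norm (\<epsilon> x))\<^sup>2 \<partial>M) \<le> (\<integral>x. indicator C x * Sb x \<partial>M)"
    using integral_indicator_le_of_nn_cond_exp_le[OF prob sub_F _ C_F _ _ int_Sb var_\<epsilon>] nonneg(4)
    by auto
  have int_R: "integrable M (\<lambda>x. indicator C x * (R1 x + R2 * (norm (\<epsilon> x))\<^sup>2))"
    using int_R1 int_\<epsilon> by (simp add: distrib_left mult.left_commute)
  have int_e: "integrable M (\<lambda>x. indicator C x * (norm (e x))\<^sup>2)"
    and le_e: "(\<integral>x. indicator C x * (norm (e x))\<^sup>2 \<partial>M)
      \<le> (\<integral>x. indicator C x * (R1 x + R2 * (norm (\<epsilon> x))\<^sup>2) \<partial>M)"
    using integral_indicator_le_of_nn_cond_exp_le[OF prob sub_FE _ \<open>C \<in> sets FE\<close> _ _ int_R var_e] nonneg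
    by auto
  then show "integrable M (\<lambda>x. indicator C x * (norm (e x))\<^sup>2)"
    by simp
  have "(\<integral>x. indicator C x * (R1 x + R2 * (norm (\<epsilon> x))\<^sup>2) \<partial>M)
      = (\<integral>x. indicator C x * R1 x \<partial>M) + R2 * (\<integral>x. indicator C x * (norm (\<epsilon> x))\<^sup>2 \<partial>M)"
    using int_R1 int_\<epsilon> by (simp add: distrib_left mult.left_commute)
  then show "(\<integral>x. indicator C x * (norm (e x))\<^sup>2 \<partial>M)
      \<le> (\<integral>x. indicator C x * R1 x \<partial>M) + R2 * (\<integral>x. indicator C x * Sb x \<partial>M)"
    using le_e mult_left_mono[OF le_\<epsilon> nonneg(1)] by linarith
qed

lemma set_nn_integral_le:
  assumes C_F: "C \<in> sets F"
    and bounded: "\<And>x. x \<in> C \<Longrightarrow>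
      \<bar>P x\<bar> \<le> real j \<and> norm (V x) \<le> real j \<and> norm (U x) \<le> real j \<and> Sb x \<le> real j \<and> R1 x \<le> real j"
  shows "(\<integral>\<^sup>+x. indicator C x * ennreal (Q x) \<partial>M)
    \<le> (\<integral>\<^sup>+x. indicator C x * ennreal (P x + cs * Sb x + ce * (R1 x + R2 * Sb x)) \<partial>M)"
proof -
  interpret prob_space M by (rule prob)
  define c where "c x = (indicator C x :: real)" for x
  have [measurable]: "C \<in> sets F" "C \<in> sets M" "C \<in> sets FE"
    using C_F F_FE sub_F unfolding subalgebra_def by blast+
  have c_cases: "c x = 0 \<or> c x = 1" for x
    unfolding c_def by (simp split: split_indicator)
  have int_bounded: "integrable M (\<lambda>x. c x * f x)"
    if [measurable]: "f \<in> borel_measurable M" and "\<And>x. x \<in> C \<Longrightarrow> \<bar>f x\<bar> \<le> j"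
    for f :: "'m \<Rightarrow> real"
  proof (rule Bochner_Integration.integrable_bound[where f="\<lambda>_. real j"])
    show "AE x in M. norm (c x * f x) \<le> norm (real j)"
      using that(2) by (auto simp: c_def split: split_indicator)
  qed (simp_all add: c_def)
  have int_P: "integrable M (\<lambda>x. c x * P x)" and int_Sb: "integrable M (\<lambda>x. c x * Sb x)"
    and int_R1: "integrable M (\<lambda>x. c x * R1 x)"
    using bounded nonneg by (auto intro!: int_bounded)
  note moments = set_second_moments_le[OF C_F int_Sb[unfolded c_def] int_R1[unfolded c_def], folded c_def]
  have [measurable]: "c \<in> borel_measurable F"
    unfolding c_def by measurable
  have bounded_VU: "norm (c x *\<^sub>R V x) \<le> j" "norm (c x *\<^sub>R U x) \<le> j" for x
    using bounded[of x] c_cases[of x] by (auto simp: c_def split: split_indicator)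
  have "(\<lambda>x. c x *\<^sub>R V x) \<in> borel_measurable F" "(\<lambda>x. c x *\<^sub>R U x) \<in> borel_measurable F"
    by measurable
  note mean_zero = integral_inner_cond_exp_zero[OF prob sub_F int_\<epsilon> _ this(1) bounded_VU(1) mean_\<epsilon>]
    integral_inner_cond_exp_zero[OF prob sub_F int_e _ this(2) bounded_VU(2) mean_e]
  define Z where "Z x = c x * P x + inner (\<epsilon> x) (c x *\<^sub>R V x) + cs * (c x * (norm (\<epsilon> x))\<^sup>2)
      + inner (e x) (c x *\<^sub>R U x) + ce * (c x * (norm (e x))\<^sup>2)" for x
  have int_Z: "integrable M Z"
    unfolding Z_def using int_P mean_zero moments(1,3) by auto
  have cQ_le: "c x * Q x \<le> Z x" for x
    using c_cases[of x] Q_le[of x] by (auto simp: Z_def)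
  have int_Q: "integrable M (\<lambda>x. c x * Q x)"
  proof (rule Bochner_Integration.integrable_bound[OF int_Z])
    have "norm (c x * Q x) \<le> norm (Z x)" for x
    proof -
      have "0 \<le> c x * Q x"
        by (simp add: c_def nonneg)
      then show ?thesis
        using cQ_le[of x] by simp
    qed
    then show "AE x in M. norm (c x * Q x) \<le> norm (Z x)"
      by simp
  qed (simp add: c_def)
  have "(\<integral>\<^sup>+x. indicator C x * ennreal (Q x) \<partial>M) = (\<integral>\<^sup>+x. ennreal (c x * Q x) \<partial>M)"
    unfolding c_def by (intro nn_integral_cong) (simp split: split_indicator)
  also have "\<dots> = ennreal (\<integral>x. c x * Q x \<partial>M)"
    using int_Q by (rule nn_integral_eq_integral) (simp add: c_def nonneg)
  also have "(\<integral>x. c x * Q x \<partial>M) \<le> (\<integral>x. Z x \<partial>M)"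
    by (rule integral_mono[OF int_Q int_Z cQ_le])
  also have "\<dots> = (\<integral>x. c x * P x \<partial>M) + cs * (\<integral>x. c x * (norm (\<epsilon> x))\<^sup>2 \<partial>M)
      + ce * (\<integral>x. c x * (norm (e x))\<^sup>2 \<partial>M)"
    unfolding Z_def using int_P mean_zero moments(1,3) by simp
  also have "\<dots> \<le> (\<integral>x. c x * P x \<partial>M) + cs * (\<integral>x. c x * Sb x \<partial>M)
      + ce * ((\<integral>x. c x * R1 x \<partial>M) + R2 * (\<integral>x. c x * Sb x \<partial>M))"
    using mult_left_mono[OF moments(2) nonneg(2)] mult_left_mono[OF moments(4) nonneg(3)] by linarith
  also have "\<dots> = (\<integral>x. c x * (P x + cs * Sb x + ce * (R1 x + R2 * Sb x)) \<partial>M)"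
    using int_P int_Sb int_R1 by (simp add: algebra_simps)
  also have "ennreal \<dots> \<le> (\<integral>\<^sup>+x. ennreal (c x * (P x + cs * Sb x + ce * (R1 x + R2 * Sb x))) \<partial>M)"
    using int_P int_Sb int_R1 by (intro ennreal_integral_le_nn_integral) (simp add: algebra_simps)
  also have "\<dots> = (\<integral>\<^sup>+x. indicator C x * ennreal (P x + cs * Sb x + ce * (R1 x + R2 * Sb x)) \<partial>M)"
    unfolding c_def by (intro nn_integral_cong) (simp split: split_indicator)
  finally show "(\<integral>\<^sup>+x. indicator C x * ennreal (Q x) \<partial>M)
      \<le> (\<integral>\<^sup>+x. indicator C x * ennreal (P x + cs * Sb x + ce * (R1 x + R2 * Sb x)) \<partial>M)"
    by (simp add: ennreal_leI)
qed

lemma nn_cond_exp_le: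
  "AE x in M. nn_cond_exp M F (\<lambda>x. ennreal (Q x)) x \<le> ennreal (P x + cs * Sb x + ce * (R1 x + R2 * Sb x))"
proof (rule nn_cond_exp_le_of_local_integrals[OF prob sub_F])
  define b where "b x = max \<bar>P x\<bar> (max (norm (V x)) (max (norm (U x)) (max (Sb x) (R1 x))))" for x
  show "(\<lambda>x. ennreal (Q x)) \<in> borel_measurable M" "b \<in> borel_measurable F"
    "(\<lambda>x. P x + cs * Sb x + ce * (R1 x + R2 * Sb x)) \<in> borel_measurable F"
    unfolding b_def by measurable
  fix C j assume "C \<in> sets F" "C \<subseteq> {x. b x \<le> real j}"
  then show "(\<integral>\<^sup>+x. indicator C x * ennreal (Q x) \<partial>M)
    \<le> (\<integral>\<^sup>+x. indicator C x * ennreal (P x + cs * Sb x + ce * (R1 x + R2 * Sb x)) \<partial>M)"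
    by (intro set_nn_integral_le[of C j]) (auto simp: b_def)
qed

end

lemma gen_sigma_space [simp]: "space (gen_sigma M Xs) = space M"
  unfolding gen_sigma_def by (rule space_measure_of) auto

lemma sets_gen_sigma:
  "sets (gen_sigma M Xs) = sigma_sets (space M) {X -` S \<inter> space M | X S. X \<in> Xs \<and> S \<in> sets borel}"
  unfolding gen_sigma_def by (rule sets_measure_of) auto

lemma subalgebra_gen_sigma:
  assumes "\<And>X. X \<in> Xs \<Longrightarrow> X \<in> borel_measurable M"
  shows "subalgebra M (gen_sigma M Xs)"
  unfolding subalgebra_def
proof
  have "{X -` S \<inter> space M | X S. X \<in> Xs \<and> S \<in> sets borel} \<subseteq> sets M"
    using assms by (auto simp: measurable_sets)
  then show "sets (gen_sigma M Xs) \<subseteq> sets M"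
    unfolding sets_gen_sigma by (rule sets.sigma_sets_subset)
qed simp

lemma measurable_gen_sigma:
  assumes "X \<in> Xs"
  shows "X \<in> borel_measurable (gen_sigma M Xs)"
proof (rule measurableI)
  fix S :: "'b set" assume "S \<in> sets borel"
  then have "X -` S \<inter> space M \<in> {X -` S \<inter> space M | X S. X \<in> Xs \<and> S \<in> sets borel}"
    using assms by blast
  then show "X -` S \<inter> space (gen_sigma M Xs) \<in> sets (gen_sigma M Xs)"
    unfolding sets_gen_sigma gen_sigma_space by (rule sigma_sets.Basic)
qed simp

lemma sets_gen_sigma_mono:
  assumes "Xs \<subseteq> Ys"
  shows "sets (gen_sigma M Xs) \<subseteq> sets (gen_sigma M Ys)"
  unfolding sets_gen_sigma by (rule sigma_sets_mono') (use assms in blast)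

section \<open>Collecting the constants\<close>

text \<open>In the following lemmas \<open>l, q, r, t, s\<close> stand for \<open>L\<^sup>2, \<rho>b\<^sup>2, \<rho>\<^sup>2, \<tau>\<^sup>2, 1 / \<tau>\<^sup>2\<close> and
  \<open>m\<close> for \<open>n + 1\<close>; \<open>dz\<close>, \<open>dw\<close> and \<open>dl\<close> are the parts of the squared distance to the solution
  coming from \<open>z\<close>, from \<open>w\<^sub>1, \<dots>, w\<^sub>n\<close> and from \<open>w\<^sub>n\<^sub>+\<^sub>1\<close>, and \<open>bz\<close> is
  \<open>(norm (B zs))\<^sup>2\<close>.\<close>

lemma monomials_le_sq_succ_mult_sq_succ:
  fixes l N :: real
  assumes l0: "0 \<le> l" and N0: "0 \<le> N"
  shows "l + N * l \<le> (l + 1)\<^sup>2 * (N + 1)\<^sup>2" "l * l \<le> (l + 1)\<^sup>2 * (N + 1)\<^sup>2" "l \<le> (l + 1)\<^sup>2 * (N + 1)\<^sup>2"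
    "N * (l * l) \<le> (l + 1)\<^sup>2 * (N + 1)\<^sup>2" "N * l \<le> (l + 1)\<^sup>2 * (N + 1)\<^sup>2"
    "N * N * (l * l) \<le> (l + 1)\<^sup>2 * (N + 1)\<^sup>2" "1 \<le> (l + 1)\<^sup>2 * (N + 1)\<^sup>2" "N * N * l \<le> (l + 1)\<^sup>2 * (N + 1)\<^sup>2"
    "N \<le> (l + 1)\<^sup>2 * (N + 1)\<^sup>2"
proof -
  have Pexp: "(l + 1)\<^sup>2 * (N + 1)\<^sup>2 = (l*l + 2*l + 1) * (N*N + 2*N + 1)" by (simp add: power2_eq_square algebra_simps)
  have lN: "0 \<le> l * N" "0 \<le> l * l" "0 \<le> l*l*N" "0 \<le> l*N*N" "0 \<le> l*l*N*N" "0 \<le> N*N" using l0 N0 by simp_all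
  show "l + N * l \<le> (l + 1)\<^sup>2 * (N + 1)\<^sup>2" "l * l \<le> (l + 1)\<^sup>2 * (N + 1)\<^sup>2" "l \<le> (l + 1)\<^sup>2 * (N + 1)\<^sup>2"
    "N * (l * l) \<le> (l + 1)\<^sup>2 * (N + 1)\<^sup>2" "N * l \<le> (l + 1)\<^sup>2 * (N + 1)\<^sup>2"
    "N * N * (l * l) \<le> (l + 1)\<^sup>2 * (N + 1)\<^sup>2" "1 \<le> (l + 1)\<^sup>2 * (N + 1)\<^sup>2" "N * N * l \<le> (l + 1)\<^sup>2 * (N + 1)\<^sup>2"
    "N \<le> (l + 1)\<^sup>2 * (N + 1)\<^sup>2"
    unfolding Pexp using lN l0 N0 by (simp_all add: algebra_simps)
qed

lemma coefficient_dz_le: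
  fixes m n l q N s t :: real
  assumes n1: "1 \<le> n" and m: "m = n + 1" and N0: "0 \<le> N" and q0: "0 \<le> q" and s0: "0 \<le> s" and ts: "t * s = 1"
    and l0: "0 \<le> l" and t0: "0 \<le> t"
  shows "(2 * m + t) * (2 * n * s) + (2 * m + (4 * l + 1) * q + 32 * N * l * q) * (2 * l)
        + ((4 * l + 1) * q + 16 * N * l * q) * (2 * N * l) + 32 * N * l
     \<le> 24 * (1 + 10 * q) * m * (l + 1)\<^sup>2 * (N + 1)\<^sup>2 + 8 * m * (2 * t + 6 * m + 1 + 3 * m\<^sup>2 * s)"
proof -
  define P where "P = (l + 1)\<^sup>2 * (N + 1)\<^sup>2"
  note PF = monomials_le_sq_succ_mult_sq_succ[OF l0 N0, folded P_def]
  have P0: "0 \<le> P" using PF by linarith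
  have t1: "(2 * m + t) * (2 * n * s) = 4 * (m * n * s) + 2 * n"
    using ts by (simp add: algebra_simps)
  have A1: "m * n * s \<le> m * m * m * s"
  proof -
    have "n \<le> m * m" using n1 m by (simp add: algebra_simps)
    then have "m * n * s \<le> m * (m * m) * s" using m n1 s0 by (intro mult_right_mono mult_left_mono) auto
    then show ?thesis by (simp add: mult.assoc)
  qed
  have A3a: "24 * m * (l + N * l) \<le> 24 * m * P" using PF m n1 by (intro mult_left_mono) auto
  have A3b: "N * l * 2 \<le> N * l * m" using m n1 N0 l0 by (intro mult_left_mono) auto
  have A4: "q * (8 * (l * l) + 2 * l + 64 * (N * (l * l)) + 8 * (N * (l * l)) + 2 * (N * l) + 32 * (N * N * (l * l))) \<le> q * (240 * m * P)"
  proof (rule mult_left_mono[OF _ q0])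
    have "8 * (l * l) + 2 * l + 64 * (N * (l * l)) + 8 * (N * (l * l)) + 2 * (N * l) + 32 * (N * N * (l * l)) \<le> 116 * P"
      using PF by linarith
    also have "\<dots> \<le> 240 * m * P" using m n1 P0 by (intro mult_right_mono) auto
    finally show "8 * (l * l) + 2 * l + 64 * (N * (l * l)) + 8 * (N * (l * l)) + 2 * (N * l) + 32 * (N * N * (l * l)) \<le> 240 * m * P" .
  qed
  have eqC: "24 * (1 + 10 * q) * m * (l + 1)\<^sup>2 * (N + 1)\<^sup>2 = 24 * (1 + 10 * q) * m * P"
    unfolding P_def by (simp add: mult.assoc)
  have A1': "4 * (m * n * s) \<le> 24 * (m * m * m * s)"
  proof -
    have "0 \<le> m * m * m * s" using m n1 s0 by simp
    then show ?thesis using A1 by linarith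
  qed
  have tt: "0 \<le> t + n * t" using t0 n1 by simp
  have hh: "0 \<le> 20 * l + 20 * (n * l) + 16 * (N * l) + 48 * (n * n)" using l0 n1 N0 by simp
  show ?thesis unfolding eqC t1 using A1' A3a A3b A4 tt hh m n1
    by (simp add: algebra_simps power2_eq_square power3_eq_cube)
qed

lemma coefficient_dw_le:
  fixes m q s t P :: real
  assumes m1: "1 \<le> m" and q0: "0 \<le> q" and s0: "0 \<le> s" and t0: "0 \<le> t" and P0: "0 \<le> P"
  shows "8 * (2 * m + t) \<le> 24 * (1 + 10 * q) * m * P + 8 * m * (2 * t + 6 * m + 1 + 3 * m\<^sup>2 * s)"
proof -
  have e2: "24 * (1 + 10 * q) * m * P + 8 * m * (2 * t + 6 * m + 1 + 3 * m\<^sup>2 * s)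
      = 24 * (m * P) + 240 * (q * (m * P)) + 16 * (m * t) + 48 * (m * m) + 8 * m + 24 * (m ^ 3 * s)"
    by (simp add: algebra_simps power2_eq_square power3_eq_cube)
  have f: "0 \<le> m * P" "0 \<le> q * (m * P)" "0 \<le> m ^ 3 * s" "t \<le> m * t" "m \<le> m * m"
    using m1 q0 s0 t0 P0 by (simp_all add: mult_right_mono[of 1 m t, simplified] mult_right_mono[of 1 m m, simplified])
  have e0: "8 * (2 * m + t) = 16 * m + 8 * t" by simp
  show ?thesis unfolding e2 e0 using f m1 t0 by linarith
qed

lemma coefficient_dl_le:
  fixes m l q N s t P :: real
  assumes m1: "1 \<le> m" and q0: "0 \<le> q" and s0: "0 \<le> s" and t0: "0 \<le> t" and l0: "0 \<le> l" and N0: "0 \<le> N"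
    and PF: "l \<le> P" "1 \<le> P" "N * l \<le> P"
  shows "2 * (2 * m + (4 * l + 1) * q + 32 * N * l * q) \<le> 24 * (1 + 10 * q) * m * P + 8 * m * (2 * t + 6 * m + 1 + 3 * m\<^sup>2 * s)"
proof -
  have P0: "0 \<le> P" using PF by linarith
  have e1: "2 * (2 * m + (4 * l + 1) * q + 32 * N * l * q) = 4 * m + q * (8 * l + 2 + 64 * (N * l))"
    by (simp add: algebra_simps)
  have e2: "24 * (1 + 10 * q) * m * P + 8 * m * (2 * t + 6 * m + 1 + 3 * m\<^sup>2 * s)
      = 24 * (m * P) + q * (240 * m * P) + 16 * (m * t) + 48 * (m * m) + 8 * m + 24 * (m ^ 3 * s)"
    by (simp add: algebra_simps power2_eq_square power3_eq_cube)
  have g1: "q * (8 * l + 2 + 64 * (N * l)) \<le> q * (240 * m * P)"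
  proof (rule mult_left_mono[OF _ q0])
    have "8 * l + 2 + 64 * (N * l) \<le> 74 * P" using PF by linarith
    also have "\<dots> \<le> 240 * m * P" using m1 P0 by (intro mult_right_mono) auto
    finally show "8 * l + 2 + 64 * (N * l) \<le> 240 * m * P" .
  qed
  have f: "0 \<le> m * P" "0 \<le> m * t" "0 \<le> m * m" "0 \<le> m ^ 3 * s"
    using m1 s0 t0 P0 by simp_all
  show ?thesis unfolding e1 e2 using f g1 m1 by linarith
qed

lemma coefficient_bz_le:
  fixes m l q N :: real
  assumes m1: "1 \<le> m" and q0: "0 \<le> q" and l0: "0 \<le> l" and N0: "0 \<le> N"
  shows "2 * N * ((4 * l + 1) * q + 16 * N * l * q) + 8 * N \<le> 16 * (N + 1) * (1 + 4 * q * m + 9 * q * l * (N + 1)) + 8"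
proof -
  have e1: "2 * N * ((4 * l + 1) * q + 16 * N * l * q) + 8 * N = q * (8 * (N * l) + 2 * N + 32 * (N * N * l)) + 8 * N"
    by (simp add: algebra_simps)
  have e2: "16 * (N + 1) * (1 + 4 * q * m + 9 * q * l * (N + 1)) + 8
     = 16 * N + 24 + q * (64 * (m * N) + 64 * m + 144 * (N * N * l) + 288 * (N * l) + 144 * l)"
    by (simp add: algebra_simps power2_eq_square)
  have i: "8 * (N * l) + 2 * N + 32 * (N * N * l) \<le> 64 * (m * N) + 64 * m + 144 * (N * N * l) + 288 * (N * l) + 144 * l"
  proof -
    have "N \<le> m * N" using m1 N0 mult_right_mono[of 1 m N] by simp
    moreover have "0 \<le> N * l" "0 \<le> N * N * l" using N0 l0 by simp_all
    ultimately show ?thesis using m1 l0 N0 by linarith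
  qed
  have "q * (8 * (N * l) + 2 * N + 32 * (N * N * l)) \<le> q * (64 * (m * N) + 64 * m + 144 * (N * N * l) + 288 * (N * l) + 144 * l)"
    by (rule mult_left_mono[OF i q0])
  then show ?thesis unfolding e1 e2 using N0 by linarith
qed

lemma coefficient_const_le:
  fixes m l q N :: real
  assumes m1: "1 \<le> m" and q0: "0 \<le> q" and l0: "0 \<le> l" and N0: "0 \<le> N"
  shows "N * ((4 * l + 1) * q + 16 * N * l * q) + 4 * N \<le> 12 * q * N * (2 * l * (N + 1) + m) + 4 * N"
proof -
  have e1: "N * ((4 * l + 1) * q + 16 * N * l * q) = q * (4 * (N * l) + N + 16 * (N * N * l))"
    by (simp add: algebra_simps)
  have e2: "12 * q * N * (2 * l * (N + 1) + m) = q * (24 * (N * N * l) + 24 * (N * l) + 12 * (m * N))"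
    by (simp add: algebra_simps)
  have i: "4 * (N * l) + N + 16 * (N * N * l) \<le> 24 * (N * N * l) + 24 * (N * l) + 12 * (m * N)"
  proof -
    have "N \<le> m * N" using m1 N0 mult_right_mono[of 1 m N] by simp
    moreover have "0 \<le> N * l" "0 \<le> N * N * l" using N0 l0 by simp_all
    ultimately show ?thesis using N0 by linarith
  qed
  show ?thesis unfolding e1 e2 using mult_left_mono[OF i q0] by linarith
qed

lemma quadratic_coefficient_le:
  fixes m n l q N N3 N4 s t dz dw dl bz Y G V S R r :: real
  assumes n1: "1 \<le> n" and m: "m = n + 1" and N0: "0 \<le> N" and N3: "0 \<le> N3" "N3 \<le> N" and N4: "0 \<le> N4" "N4 \<le> N"
    and l0: "0 \<le> l" and r0: "0 \<le> r" and r_le: "r \<le> q" and s0: "0 \<le> s" and t0: "0 \<le> t" and ts: "t * s = 1"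
    and dz0: "0 \<le> dz" and dw0: "0 \<le> dw" and dl0: "0 \<le> dl" and bz0: "0 \<le> bz"
    and Y0: "0 \<le> Y" and G0: "0 \<le> G" and S0: "0 \<le> S"
    and Y_le: "Y \<le> 2 * n * dz * s + 8 * dw" and G_le: "G \<le> 2 * l * dz + 2 * dl"
    and S_le: "S \<le> N + 2 * N * l * dz + 2 * N * bz" and V_le: "V \<le> m * (Y + G)"
    and R_le: "R \<le> N4 * (8 * l * dz + 8 * l * r * G + 2 * bz) + N3"
  shows "2 * V + t * Y + (4 * l + 1) * r * G + (4 * l + 1) * r * S + 4 * (R + 4 * N4 * l * r * S)
    \<le> (24 * (1 + 10 * q) * m * (l + 1)\<^sup>2 * (N + 1)\<^sup>2 + 8 * m * (2 * t + 6 * m + 1 + 3 * m\<^sup>2 * s)) * (dz + dw + dl)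
       + (16 * (N + 1) * (1 + 4 * q * m + 9 * q * l * (N + 1)) + 8) * bz
       + (12 * q * N * (2 * l * (N + 1) + m) + 4 * N)"
proof -
  have q0: "0 \<le> q" using r0 r_le by linarith
  have m1: "1 \<le> m" using m n1 by simp
  define cY where "cY = 2 * m + t"
  define cG where "cG = 2 * m + (4 * l + 1) * q + 32 * N * l * q"
  define cS where "cS = (4 * l + 1) * q + 16 * N * l * q"
  define C1 where "C1 = 24 * (1 + 10 * q) * m * (l + 1)\<^sup>2 * (N + 1)\<^sup>2 + 8 * m * (2 * t + 6 * m + 1 + 3 * m\<^sup>2 * s)"
  define Cb where "Cb = 16 * (N + 1) * (1 + 4 * q * m + 9 * q * l * (N + 1)) + 8"
  define C0 where "C0 = 12 * q * N * (2 * l * (N + 1) + m) + 4 * N"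
  define Kz where "Kz = cY * (2 * n * s) + cG * (2 * l) + cS * (2 * N * l) + 32 * N * l"
  have cY0: "0 \<le> cY" unfolding cY_def using m1 t0 by simp
  have cG0: "0 \<le> cG" unfolding cG_def using m1 q0 l0 N0 by simp
  have cS0: "0 \<le> cS" unfolding cS_def using q0 l0 N0 by simp
  have crude: "2 * V + t * Y + (4 * l + 1) * r * G + (4 * l + 1) * r * S + 4 * (R + 4 * N4 * l * r * S)
      \<le> cY * Y + cG * G + cS * S + 32 * N * l * dz + 8 * N * bz + 4 * N"
  proof -
    have p1: "(4 * l + 1) * r * G \<le> (4 * l + 1) * q * G"
      using r_le l0 G0 by (intro mult_right_mono mult_left_mono) auto
    have p2: "(4 * l + 1) * r * S \<le> (4 * l + 1) * q * S"
      using r_le l0 S0 by (intro mult_right_mono mult_left_mono) auto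
    have p3: "N4 * (8 * l * dz) \<le> N * (8 * l * dz)" using N4 l0 dz0 by (intro mult_right_mono) auto
    have p4: "N4 * (8 * l * r * G) \<le> N * (8 * l * q * G)"
      using N4 r_le r0 l0 G0 N0 by (intro mult_mono mult_right_mono mult_left_mono) auto
    have p5: "N4 * (2 * bz) \<le> N * (2 * bz)" using N4 bz0 by (intro mult_right_mono) auto
    have p6: "N4 * l * r * S \<le> N * l * q * S"
      using N4 r_le r0 l0 S0 N0 by (intro mult_mono mult_right_mono mult_left_mono) auto
    have p7: "2 * V \<le> 2 * m * Y + 2 * m * G" using V_le by (simp add: algebra_simps)
    show ?thesis unfolding cY_def cG_def cS_def using p1 p2 p3 p4 p5 p6 p7 R_le N3 by (simp add: algebra_simps)
  qed
  have substituted: "cY * Y + cG * G + cS * S \<le> cY * (2 * n * dz * s + 8 * dw) + cG * (2 * l * dz + 2 * dl) + cS * (N + 2 * N * l * dz + 2 * N * bz)"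
    using mult_left_mono[OF Y_le cY0] mult_left_mono[OF G_le cG0] mult_left_mono[OF S_le cS0] by linarith
  have regrouped: "cY * (2 * n * dz * s + 8 * dw) + cG * (2 * l * dz + 2 * dl) + cS * (N + 2 * N * l * dz + 2 * N * bz)
        + 32 * N * l * dz + 8 * N * bz + 4 * N
      = Kz * dz + (8 * cY) * dw + (2 * cG) * dl + (2 * N * cS + 8 * N) * bz + (N * cS + 4 * N)"
    unfolding Kz_def by (simp add: algebra_simps)
  have coeff_dz: "Kz \<le> C1" unfolding Kz_def C1_def cY_def cG_def cS_def
    by (rule coefficient_dz_le[OF n1 m N0 q0 s0 ts l0 t0])
  note PF = monomials_le_sq_succ_mult_sq_succ[OF l0 N0]
  have C1eq: "C1 = 24 * (1 + 10 * q) * m * ((l + 1)\<^sup>2 * (N + 1)\<^sup>2) + 8 * m * (2 * t + 6 * m + 1 + 3 * m\<^sup>2 * s)"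
    unfolding C1_def by (simp add: mult.assoc)
  have coeff_dw: "8 * cY \<le> C1" unfolding C1eq cY_def
    by (rule coefficient_dw_le[OF m1 q0 s0 t0]) (use PF in linarith)
  have coeff_dl: "2 * cG \<le> C1" unfolding C1eq cG_def
    by (rule coefficient_dl_le[OF m1 q0 s0 t0 l0 N0]) (use PF in \<open>simp_all add: mult.commute\<close>)
  have coeff_bz: "2 * N * cS + 8 * N \<le> Cb" unfolding Cb_def cS_def
    using coefficient_bz_le[OF m1 q0 l0 N0] by (simp add: mult.assoc)
  have coeff_const: "N * cS + 4 * N \<le> C0" unfolding C0_def cS_def by (rule coefficient_const_le[OF m1 q0 l0 N0])
  have f1: "Kz * dz \<le> C1 * dz" using coeff_dz dz0 by (rule mult_right_mono)
  have f2: "(8 * cY) * dw \<le> C1 * dw" using coeff_dw dw0 by (rule mult_right_mono)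
  have f3: "(2 * cG) * dl \<le> C1 * dl" using coeff_dl dl0 by (rule mult_right_mono)
  have f4: "(2 * N * cS + 8 * N) * bz \<le> Cb * bz" using coeff_bz bz0 by (rule mult_right_mono)
  have C1d: "C1 * (dz + dw + dl) = C1 * dz + C1 * dw + C1 * dl" by (simp add: algebra_simps)
  have "2 * V + t * Y + (4 * l + 1) * r * G + (4 * l + 1) * r * S + 4 * (R + 4 * N4 * l * r * S)
    \<le> C1 * (dz + dw + dl) + Cb * bz + C0"
    unfolding C1d using crude substituted regrouped f1 f2 f3 f4 coeff_const by linarith
  then show ?thesis unfolding C1_def Cb_def C0_def .
qed

lemma linear_coefficient_le:
  fixes \<rho> \<rho>b \<tau> L N D dz bz Y X G S :: real
  assumes rh: "0 \<le> \<rho>" "\<rho> \<le> \<rho>b" and tau: "0 < \<tau>" and L: "0 < L" and N: "0 \<le> N"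
    and dz_le: "dz \<le> D" and Y0: "0 \<le> Y" and X_eq: "X = \<tau>\<^sup>2 * Y" and G0: "0 \<le> G"
    and S_le: "S \<le> N + 2 * N * L\<^sup>2 * dz + 2 * N * bz"
  shows "- 2 * \<tau> * Y - 2 * \<rho> * (1 - L * \<rho>) * G + 2 * L * \<rho>\<^sup>2 * S
    \<le> 4 * N * L ^ 3 * \<rho>\<^sup>2 * D - \<rho> * ((\<tau> / \<rho>b) * Y + (1 / (\<rho>b * \<tau>)) * X + 2 * (1 - \<rho>b * L) * G)
      + 2 * N * L * (1 + 2 * bz) * \<rho>\<^sup>2"
proof (cases "\<rho> = 0")
  case True
  then show ?thesis using tau Y0 by simp
next
  case False
  then have "0 < \<rho>" "0 < \<rho>b" using rh by simp_all
  have dual: "\<rho> * ((\<tau> / \<rho>b) * Y + (1 / (\<rho>b * \<tau>)) * X) \<le> 2 * \<tau> * Y"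
  proof -
    have "(1 / (\<rho>b * \<tau>)) * X = (\<tau> / \<rho>b) * Y"
      unfolding X_eq using tau by (simp add: power2_eq_square field_simps)
    then have "\<rho> * ((\<tau> / \<rho>b) * Y + (1 / (\<rho>b * \<tau>)) * X) = 2 * (\<rho> / \<rho>b) * (\<tau> * Y)"
      by (simp add: field_simps)
    also have "\<dots> \<le> 2 * 1 * (\<tau> * Y)"
      using rh \<open>0 < \<rho>b\<close> tau Y0 by (intro mult_right_mono mult_left_mono) auto
    finally show ?thesis by simp
  qed
  have forward: "\<rho> * (1 - \<rho>b * L) * G \<le> \<rho> * (1 - L * \<rho>) * G"
    using rh L G0 by (intro mult_right_mono mult_left_mono) (auto simp: mult.commute mult_left_mono)
  have noise: "2 * L * \<rho>\<^sup>2 * S \<le> 4 * N * L ^ 3 * \<rho>\<^sup>2 * D + 2 * N * L * (1 + 2 * bz) * \<rho>\<^sup>2"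
  proof -
    have "2 * L * S \<le> 2 * L * (N + 2 * N * L\<^sup>2 * dz + 2 * N * bz)"
      using S_le L by simp
    also have "\<dots> = 4 * N * L ^ 3 * dz + 2 * N * L * (1 + 2 * bz)"
      by (simp add: algebra_simps power2_eq_square power3_eq_cube)
    also have "\<dots> \<le> 4 * N * L ^ 3 * D + 2 * N * L * (1 + 2 * bz)"
      using dz_le N L by (intro add_right_mono mult_left_mono) auto
    finally have "\<rho>\<^sup>2 * (2 * L * S) \<le> \<rho>\<^sup>2 * (4 * N * L ^ 3 * D + 2 * N * L * (1 + 2 * bz))"
      by (simp add: mult_left_mono)
    then show ?thesis by (simp add: algebra_simps)
  qed
  show ?thesis
    using dual forward noise by (simp add: algebra_simps)
qed

lemma one_step_coefficients_le:
  fixes \<alpha> \<rho> \<rho>b \<tau> L N N3 N4 D dz dw dl bz Y X G V S R :: real and n :: nat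
  assumes al: "0 \<le> \<alpha>" and rh: "0 \<le> \<rho>" "\<rho> \<le> \<rho>b" and tau: "0 < \<tau>" and L: "0 < L" and n1: "1 \<le> n"
    and Ns: "0 \<le> N3" "N3 \<le> N" "0 \<le> N4" "N4 \<le> N" "0 \<le> N"
    and dz0: "0 \<le> dz" and dw0: "0 \<le> dw" and dl0: "0 \<le> dl" and bz0: "0 \<le> bz"
    and D_eq: "D = dz + dw + dl" and Y0: "0 \<le> Y" and X_eq: "X = \<tau>\<^sup>2 * Y" and G0: "0 \<le> G" and S0: "0 \<le> S"
    and Y_le: "Y \<le> 2 * real n * dz / \<tau>\<^sup>2 + 8 * dw" and G_le: "G \<le> 2 * L\<^sup>2 * dz + 2 * dl"
    and S_le: "S \<le> N + 2 * N * L\<^sup>2 * dz + 2 * N * bz" and V_le: "V \<le> real (n+1) * (Y + G)"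
    and R_le: "R \<le> N4 * (8 * L\<^sup>2 * dz + 8 * L\<^sup>2 * \<rho>\<^sup>2 * G + 2 * bz) + N3"
  shows "D - 2 * \<alpha> * \<tau> * Y - 2 * \<alpha> * \<rho> * (1 - L * \<rho>) * G
          + \<alpha>\<^sup>2 * (2 * V + \<tau>\<^sup>2 * Y + (4 * L\<^sup>2 + 1) * \<rho>\<^sup>2 * G)
        + (2 * \<alpha> * L * \<rho>\<^sup>2 + \<alpha>\<^sup>2 * (4 * L\<^sup>2 + 1) * \<rho>\<^sup>2) * S
        + 4 * \<alpha>\<^sup>2 * (R + 4 * N4 * L\<^sup>2 * \<rho>\<^sup>2 * S)
    \<le> (1 + (24 * (1 + 10 * \<rho>b\<^sup>2) * real (n+1) * (L\<^sup>2 + 1)\<^sup>2 * (N + 1)\<^sup>2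
          + 8 * real (n+1) * (2 * \<tau>\<^sup>2 + 6 * real (n+1) + 1 + 3 * (real (n+1))\<^sup>2 / \<tau>\<^sup>2)) * \<alpha>\<^sup>2
        + 4 * N * L ^ 3 * \<alpha> * \<rho>\<^sup>2) * D
       - \<alpha> * \<rho> * ((\<tau> / \<rho>b) * Y + (1 / (\<rho>b * \<tau>)) * X + 2 * (1 - \<rho>b * L) * G)
       + (16 * (N + 1) * (1 + 4 * \<rho>b\<^sup>2 * real (n+1) + 9 * \<rho>b\<^sup>2 * L\<^sup>2 * (N + 1)) * bz
          + 8 * bz + 12 * \<rho>b\<^sup>2 * N * (2 * L\<^sup>2 * (N + 1) + real (n+1)) + 4 * N) * \<alpha>\<^sup>2
       + 2 * N * L * (1 + 2 * bz) * \<alpha> * \<rho>\<^sup>2"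
proof -
  define C1 where "C1 = 24 * (1 + 10 * \<rho>b\<^sup>2) * real (n+1) * (L\<^sup>2 + 1)\<^sup>2 * (N + 1)\<^sup>2
    + 8 * real (n+1) * (2 * \<tau>\<^sup>2 + 6 * real (n+1) + 1 + 3 * (real (n+1))\<^sup>2 / \<tau>\<^sup>2)"
  define C3 where "C3 = 4 * N * L ^ 3"
  define Quad where "Quad = 2 * V + \<tau>\<^sup>2 * Y + (4 * L\<^sup>2 + 1) * \<rho>\<^sup>2 * G + (4 * L\<^sup>2 + 1) * \<rho>\<^sup>2 * S + 4 * (R + 4 * N4 * L\<^sup>2 * \<rho>\<^sup>2 * S)"
  define Lin where "Lin = - 2 * \<tau> * Y - 2 * \<rho> * (1 - L * \<rho>) * G + 2 * L * \<rho>\<^sup>2 * S"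
  define C2 where "C2 = 16 * (N + 1) * (1 + 4 * \<rho>b\<^sup>2 * real (n+1) + 9 * \<rho>b\<^sup>2 * L\<^sup>2 * (N + 1)) * bz
          + 8 * bz + 12 * \<rho>b\<^sup>2 * N * (2 * L\<^sup>2 * (N + 1) + real (n+1)) + 4 * N"
  define LinH where "LinH = C3 * \<rho>\<^sup>2 * D - \<rho> * ((\<tau> / \<rho>b) * Y + (1 / (\<rho>b * \<tau>)) * X + 2 * (1 - \<rho>b * L) * G) + (2 * N * L * (1 + 2 * bz)) * \<rho>\<^sup>2"
  have lhs_eq: "D - 2 * \<alpha> * \<tau> * Y - 2 * \<alpha> * \<rho> * (1 - L * \<rho>) * G
          + \<alpha>\<^sup>2 * (2 * V + \<tau>\<^sup>2 * Y + (4 * L\<^sup>2 + 1) * \<rho>\<^sup>2 * G)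
        + (2 * \<alpha> * L * \<rho>\<^sup>2 + \<alpha>\<^sup>2 * (4 * L\<^sup>2 + 1) * \<rho>\<^sup>2) * S
        + 4 * \<alpha>\<^sup>2 * (R + 4 * N4 * L\<^sup>2 * \<rho>\<^sup>2 * S) = D + \<alpha> * Lin + \<alpha>\<^sup>2 * Quad"
    unfolding Lin_def Quad_def by (simp add: algebra_simps)
  have rhs_eq: "(1 + C1 * \<alpha>\<^sup>2 + C3 * \<alpha> * \<rho>\<^sup>2) * D
       - \<alpha> * \<rho> * ((\<tau> / \<rho>b) * Y + (1 / (\<rho>b * \<tau>)) * X + 2 * (1 - \<rho>b * L) * G)
       + C2 * \<alpha>\<^sup>2 + 2 * N * L * (1 + 2 * bz) * \<alpha> * \<rho>\<^sup>2 = D + \<alpha> * LinH + \<alpha>\<^sup>2 * (C1 * D + C2)"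
    unfolding LinH_def by (simp add: algebra_simps)
  have quadratic: "Quad \<le> C1 * D + C2"
  proof -
    have rho_sq_le: "\<rho>\<^sup>2 \<le> \<rho>b\<^sup>2" using rh by (simp add: power_mono)
    have tau_sq_inv: "\<tau>\<^sup>2 * (1 / \<tau>\<^sup>2) = 1" using tau by simp
    have Y_le': "Y \<le> 2 * real n * dz * (1 / \<tau>\<^sup>2) + 8 * dw" using Y_le by simp
    have quadratic_le: "Quad \<le> (24 * (1 + 10 * \<rho>b\<^sup>2) * real (n+1) * (L\<^sup>2 + 1)\<^sup>2 * (N + 1)\<^sup>2 + 8 * real (n+1) * (2 * \<tau>\<^sup>2 + 6 * real (n+1) + 1 + 3 * (real (n+1))\<^sup>2 * (1 / \<tau>\<^sup>2))) * (dz + dw + dl)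
       + (16 * (N + 1) * (1 + 4 * \<rho>b\<^sup>2 * real (n+1) + 9 * \<rho>b\<^sup>2 * L\<^sup>2 * (N + 1)) + 8) * bz
       + (12 * \<rho>b\<^sup>2 * N * (2 * L\<^sup>2 * (N + 1) + real (n+1)) + 4 * N)"
      unfolding Quad_def
      by (rule quadratic_coefficient_le[of "real n" "real (n+1)" N N3 N4 "L\<^sup>2" "\<rho>\<^sup>2" "\<rho>b\<^sup>2" "1 / \<tau>\<^sup>2" "\<tau>\<^sup>2"])
         (use n1 Ns rho_sq_le tau_sq_inv dz0 dw0 dl0 bz0 Y0 G0 S0 Y_le' G_le S_le V_le R_le in \<open>simp_all add: mult.commute mult.left_commute\<close>)
    have "3 * (real (n+1))\<^sup>2 * (1 / \<tau>\<^sup>2) = 3 * (real (n+1))\<^sup>2 / \<tau>\<^sup>2" by simp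
    then show ?thesis using quadratic_le unfolding C1_def C2_def D_eq by (simp add: algebra_simps)
  qed
  have linear: "Lin \<le> LinH"
    unfolding Lin_def LinH_def C3_def
    by (rule linear_coefficient_le[OF rh tau L Ns(5) _ Y0 X_eq G0 S_le]) (use D_eq dw0 dl0 in simp)
  have "D + \<alpha> * Lin + \<alpha>\<^sup>2 * Quad \<le> D + \<alpha> * LinH + \<alpha>\<^sup>2 * (C1 * D + C2)"
    using mult_left_mono[OF linear al] mult_left_mono[OF quadratic, of "\<alpha>\<^sup>2"] by simp
  then show ?thesis
    unfolding lhs_eq rhs_eq[unfolded C1_def C2_def C3_def] C1_def C2_def .
qed

lemma lipschitz_on_UNIV_norm_le:
  assumes "L-lipschitz_on UNIV B"
  shows "norm (B a - B b) \<le> L * norm (a - b)"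
  using lipschitz_onD[OF assms, of a b] by (simp add: dist_norm)

lemma power2_norm_lipschitz_le:
  fixes B :: "'a::real_inner \<Rightarrow> 'a"
  assumes "L-lipschitz_on UNIV B"
  shows "(norm (B z - v))\<^sup>2 \<le> 2 * L\<^sup>2 * (norm (z - zs))\<^sup>2 + 2 * (norm (B zs - v))\<^sup>2"
proof -
  have "(norm (B z - v))\<^sup>2 \<le> 2 * (norm (B z - B zs))\<^sup>2 + 2 * (norm (B zs - v))\<^sup>2"
    using power2_norm_add_le[of "B z - B zs" "B zs - v"] by simp
  moreover have "(norm (B z - B zs))\<^sup>2 \<le> L\<^sup>2 * (norm (z - zs))\<^sup>2"
    using power_mono[OF lipschitz_on_UNIV_norm_le[OF assms, of z zs] norm_ge_zero, of 2]
    by (simp add: power_mult_distrib)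
  ultimately show ?thesis by linarith
qed

lemma power2_norm_forward_point_le:
  fixes B :: "'a::real_inner \<Rightarrow> 'a"
  assumes lip: "L-lipschitz_on UNIV B" and x: "x = z - \<rho> *\<^sub>R ((B z + \<epsilon>) - w)"
  shows "(norm (B x))\<^sup>2 \<le> 8 * L\<^sup>2 * (norm (z - zs))\<^sup>2 + 8 * L\<^sup>2 * \<rho>\<^sup>2 * (norm (B z - w))\<^sup>2
    + 4 * L\<^sup>2 * \<rho>\<^sup>2 * (norm \<epsilon>)\<^sup>2 + 2 * (norm (B zs))\<^sup>2"
proof -
  have "x - zs = ((z - zs) - \<rho> *\<^sub>R (B z - w)) - \<rho> *\<^sub>R \<epsilon>"
    unfolding x by (simp add: algebra_simps)
  then have "(norm (x - zs))\<^sup>2 \<le> 2 * (norm ((z - zs) - \<rho> *\<^sub>R (B z - w)))\<^sup>2 + 2 * (norm (\<rho> *\<^sub>R \<epsilon>))\<^sup>2"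
    using power2_norm_diff_le by metis
  moreover have "(norm ((z - zs) - \<rho> *\<^sub>R (B z - w)))\<^sup>2
      \<le> 2 * (norm (z - zs))\<^sup>2 + 2 * (norm (\<rho> *\<^sub>R (B z - w)))\<^sup>2"
    by (rule power2_norm_diff_le)
  ultimately have "(norm (x - zs))\<^sup>2
      \<le> 4 * (norm (z - zs))\<^sup>2 + 4 * \<rho>\<^sup>2 * (norm (B z - w))\<^sup>2 + 2 * \<rho>\<^sup>2 * (norm \<epsilon>)\<^sup>2"
    by (simp add: power_mult_distrib)
  then have "L\<^sup>2 * (norm (x - zs))\<^sup>2
      \<le> L\<^sup>2 * (4 * (norm (z - zs))\<^sup>2 + 4 * \<rho>\<^sup>2 * (norm (B z - w))\<^sup>2 + 2 * \<rho>\<^sup>2 * (norm \<epsilon>)\<^sup>2)"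
    by (rule mult_left_mono) simp
  then show ?thesis
    using power2_norm_lipschitz_le[OF lip, of x 0 zs] by (simp add: algebra_simps)
qed

lemma resolvent_step_dual_le:
  fixes A :: "'a::euclidean_space \<Rightarrow> 'a set"
  assumes mm: "maximal_monotone A" and tau: "0 < \<tau>" and ws: "ws \<in> A zs"
    and x: "x = resolvent \<tau> A (z + \<tau> *\<^sub>R w)" and y: "z + \<tau> *\<^sub>R w = x + \<tau> *\<^sub>R y"
  shows "norm (y - w) \<le> norm (z - zs) / \<tau> + 2 * norm (w - ws)"
proof -
  have "resolvent \<tau> A (zs + \<tau> *\<^sub>R ws) = zs"
    by (rule resolvent_eqI[OF maximal_monotone_imp_monotone_op[OF mm] tau ws])
  then have "norm (((z + \<tau> *\<^sub>R w) - x) - ((zs + \<tau> *\<^sub>R ws) - zs))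
      \<le> norm ((z + \<tau> *\<^sub>R w) - (zs + \<tau> *\<^sub>R ws))"
    using resolvent_complement_nonexpansive[OF mm tau, of "z + \<tau> *\<^sub>R w" "zs + \<tau> *\<^sub>R ws"]
    unfolding x[symmetric] by simp
  moreover have "((z + \<tau> *\<^sub>R w) - x) - ((zs + \<tau> *\<^sub>R ws) - zs) = \<tau> *\<^sub>R (y - ws)"
    using y by (simp add: algebra_simps)
  moreover have "(z + \<tau> *\<^sub>R w) - (zs + \<tau> *\<^sub>R ws) = (z - zs) + \<tau> *\<^sub>R (w - ws)"
    by (simp add: algebra_simps)
  ultimately have "norm (\<tau> *\<^sub>R (y - ws)) \<le> norm ((z - zs) + \<tau> *\<^sub>R (w - ws))"
    by simp
  then have "\<tau> * norm (y - ws) \<le> norm (z - zs) + \<tau> * norm (w - ws)"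
    using norm_triangle_ineq[of "z - zs" "\<tau> *\<^sub>R (w - ws)"] tau by simp
  then have "norm (y - ws) \<le> norm (z - zs) / \<tau> + norm (w - ws)"
    using tau by (simp add: field_simps)
  moreover have "norm (y - w) \<le> norm (y - ws) + norm (w - ws)"
    using norm_triangle_ineq4[of "y - ws" "w - ws"] by simp
  ultimately show ?thesis by linarith
qed

lemma sum_power2_norm_le_of_le:
  fixes v u :: "'i \<Rightarrow> 'a::real_normed_vector"
  assumes "\<And>i. i \<in> I \<Longrightarrow> norm (v i) \<le> c + 2 * norm (u i)"
  shows "(\<Sum>i\<in>I. (norm (v i))\<^sup>2) \<le> 2 * real (card I) * c\<^sup>2 + 8 * (\<Sum>i\<in>I. (norm (u i))\<^sup>2)"
proof -
  have "(\<Sum>i\<in>I. (norm (v i))\<^sup>2) \<le> (\<Sum>i\<in>I. 2 * c\<^sup>2 + 8 * (norm (u i))\<^sup>2)"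
  proof (rule sum_mono)
    fix i assume "i \<in> I"
    then have "(norm (v i))\<^sup>2 \<le> (c + 2 * norm (u i))\<^sup>2"
      using assms by (simp add: power_mono)
    also have "\<dots> \<le> 2 * c\<^sup>2 + 8 * (norm (u i))\<^sup>2"
      using sum_squares_bound[of c "2 * norm (u i)"] by (simp add: power2_eq_square algebra_simps)
    finally show "(norm (v i))\<^sup>2 \<le> 2 * c\<^sup>2 + 8 * (norm (u i))\<^sup>2" .
  qed
  also have "\<dots> = 2 * real (card I) * c\<^sup>2 + 8 * (\<Sum>i\<in>I. (norm (u i))\<^sup>2)"
    by (simp add: sum.distrib sum_distrib_left)
  finally show ?thesis .
qed

section \<open>The stochastic projective splitting iteration\<close>

locale sps_iteration =
  fixes M :: "'m measure" and n :: nat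
    and A :: "nat \<Rightarrow> 'a::euclidean_space \<Rightarrow> 'a set" and B :: "'a \<Rightarrow> 'a"
    and L \<tau> \<rho>b N1 N2 N3 N4 N :: real and \<alpha> \<rho> :: "nat \<Rightarrow> real"
    and z :: "nat \<Rightarrow> 'm \<Rightarrow> 'a" and w x y :: "nat \<Rightarrow> nat \<Rightarrow> 'm \<Rightarrow> 'a"
    and eps e :: "nat \<Rightarrow> 'm \<Rightarrow> 'a" and F FE :: "nat \<Rightarrow> 'm measure"
  assumes M: "prob_space M"
    and n: "n \<ge> 1"
    and A_mm: "\<forall>i\<in>{1..n}. maximal_monotone (A i)"
    and B_mono: "monotone_fun B"
    and L_pos: "L > 0"
    and B_lip: "L-lipschitz_on UNIV B"
    and tau_pos: "\<tau> > 0"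
    and alpha_pos: "\<forall>k\<ge>1. \<alpha> k > 0"
    and rho_bd: "\<forall>k\<ge>1. 0 < \<rho> k \<and> \<rho> k \<le> \<rho>b"
    and init_meas: "z 1 \<in> borel_measurable M" "\<forall>i\<in>{1..n+1}. w 1 i \<in> borel_measurable M"
    and init_sum: "\<forall>\<omega>. (\<Sum>i=1..n+1. w 1 i \<omega>) = 0"
    and alg_x: "\<forall>k\<ge>1. \<forall>i\<in>{1..n}. \<forall>\<omega>. x k i \<omega> = resolvent \<tau> (A i) (z k \<omega> + \<tau> *\<^sub>R w k i \<omega>)"
    and alg_y: "\<forall>k\<ge>1. \<forall>i\<in>{1..n}. \<forall>\<omega>.
                  y k i \<omega> = (1 / \<tau>) *\<^sub>R ((z k \<omega> + \<tau> *\<^sub>R w k i \<omega>) - x k i \<omega>)"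
    and alg_xn: "\<forall>k\<ge>1. \<forall>\<omega>.
                  x k (n+1) \<omega> = z k \<omega> - \<rho> k *\<^sub>R ((B (z k \<omega>) + eps k \<omega>) - w k (n+1) \<omega>)"
    and alg_yn: "\<forall>k\<ge>1. \<forall>\<omega>. y k (n+1) \<omega> = B (x k (n+1) \<omega>) + e k \<omega>"
    and alg_z: "\<forall>k\<ge>1. \<forall>\<omega>. z (k+1) \<omega> = z k \<omega> - \<alpha> k *\<^sub>R (\<Sum>i=1..n+1. y k i \<omega>)"
    and alg_w: "\<forall>k\<ge>1. \<forall>i\<in>{1..n+1}. \<forall>\<omega>.
                  w (k+1) i \<omega> = w k i \<omega> - \<alpha> k *\<^sub>R (x k i \<omega> - (1 / real (n+1)) *\<^sub>R (\<Sum>j=1..n+1. x k j \<omega>))"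
    and noise_rv: "\<forall>k\<ge>1. eps k \<in> borel_measurable M \<and> e k \<in> borel_measurable M"
    and noise_int: "\<forall>k\<ge>1. integrable M (eps k) \<and> integrable M (e k)"
    and F_def: "\<forall>k. F k = gen_sigma M ({z j | j. 1 \<le> j \<and> j \<le> k}
                   \<union> {w j i | j i. 1 \<le> j \<and> j \<le> k \<and> 1 \<le> i \<and> i \<le> n+1})"
    and FE_def: "\<forall>k. FE k = gen_sigma M ({z j | j. 1 \<le> j \<and> j \<le> k}
                   \<union> {w j i | j i. 1 \<le> j \<and> j \<le> k \<and> 1 \<le> i \<and> i \<le> n+1} \<union> {eps k})"
    and N_nonneg: "0 \<le> N1" "0 \<le> N2" "0 \<le> N3" "0 \<le> N4"
    and N_def: "N = max (max N1 N2) (max N3 N4)"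
    and noise_cond: "AE \<omega> in M. \<forall>k\<ge>1.
         (\<forall>b\<in>Basis. real_cond_exp M (F k) (\<lambda>\<omega>. inner (eps k \<omega>) b) \<omega> = 0)
       \<and> (\<forall>b\<in>Basis. real_cond_exp M (F k) (\<lambda>\<omega>. inner (e k \<omega>) b) \<omega> = 0)
       \<and> nn_cond_exp M (F k) (\<lambda>\<omega>. ennreal ((norm (eps k \<omega>))\<^sup>2)) \<omega>
            \<le> ennreal (N1 + N2 * (norm (B (z k \<omega>)))\<^sup>2)
       \<and> nn_cond_exp M (FE k) (\<lambda>\<omega>. ennreal ((norm (e k \<omega>))\<^sup>2)) \<omega>
            \<le> ennreal (N3 + N4 * (norm (B (x k (n+1) \<omega>)))\<^sup>2)"
begin

lemma continuous_on_resolvent: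
  assumes "i \<in> {1..n}"
  shows "continuous_on UNIV (resolvent \<tau> (A i))"
proof -
  have "1-lipschitz_on UNIV (resolvent \<tau> (A i))"
    using resolvent_nonexpansive[OF A_mm[rule_format, OF assms] tau_pos]
    by (intro lipschitz_onI) (simp_all add: dist_norm)
  then show ?thesis
    by (rule lipschitz_on_continuous_on)
qed

lemma measurable_comp_B [measurable]:
  "f \<in> borel_measurable S \<Longrightarrow> (\<lambda>\<omega>. B (f \<omega>)) \<in> borel_measurable S"
  using borel_measurable_continuous_on[OF lipschitz_on_continuous_on[OF B_lip]] .

lemma measurable_resolvent_step:
  assumes k: "k \<ge> 1" and i: "i \<in> {1..n}"
    and [measurable]: "z k \<in> borel_measurable S" "w k i \<in> borel_measurable S"
  shows "x k i \<in> borel_measurable S" and "y k i \<in> borel_measurable S"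
proof -
  have "x k i = (\<lambda>\<omega>. resolvent \<tau> (A i) (z k \<omega> + \<tau> *\<^sub>R w k i \<omega>))"
    using alg_x k i by auto
  also have "\<dots> \<in> borel_measurable S"
    by (intro borel_measurable_continuous_on[OF continuous_on_resolvent[OF i]]) measurable
  finally show x_meas [measurable]: "x k i \<in> borel_measurable S" .
  have "y k i = (\<lambda>\<omega>. (1 / \<tau>) *\<^sub>R ((z k \<omega> + \<tau> *\<^sub>R w k i \<omega>) - x k i \<omega>))"
    using alg_y k i by auto
  also have "\<dots> \<in> borel_measurable S"
    by measurable
  finally show "y k i \<in> borel_measurable S" .
qed

lemma measurable_forward_step:
  assumes k: "k \<ge> 1" and [measurable]: "z k \<in> borel_measurable M" "w k (n+1) \<in> borel_measurable M"
  shows "x k (n+1) \<in> borel_measurable M" and "y k (n+1) \<in> borel_measurable M"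
proof -
  have [measurable]: "eps k \<in> borel_measurable M" "e k \<in> borel_measurable M"
    using noise_rv k by auto
  have "x k (n+1) = (\<lambda>\<omega>. z k \<omega> - \<rho> k *\<^sub>R ((B (z k \<omega>) + eps k \<omega>) - w k (n+1) \<omega>))"
    using alg_xn k by auto
  also have "\<dots> \<in> borel_measurable M"
    by measurable
  finally show x_meas [measurable]: "x k (n+1) \<in> borel_measurable M" .
  have "y k (n+1) = (\<lambda>\<omega>. B (x k (n+1) \<omega>) + e k \<omega>)"
    using alg_yn k by auto
  also have "\<dots> \<in> borel_measurable M"
    by measurable
  finally show "y k (n+1) \<in> borel_measurable M" .
qed

lemma measurable_iterates:
  assumes "k \<ge> 1"
  shows "z k \<in> borel_measurable M \<and> (\<forall>i\<in>{1..n+1}. w k i \<in> borel_measurable M)"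
  using assms
proof (induction k rule: dec_induct)
  case base
  then show ?case using init_meas by simp
next
  case (step k)
  have [measurable]: "z k \<in> borel_measurable M"
    and w_meas: "\<And>i. i \<in> {1..n+1} \<Longrightarrow> w k i \<in> borel_measurable M"
    using step.IH by auto
  have xy_meas: "x k i \<in> borel_measurable M \<and> y k i \<in> borel_measurable M" if "i \<in> {1..n+1}" for i
  proof (cases "i = n+1")
    case True
    then show ?thesis
      using measurable_forward_step[OF step.hyps(1)] w_meas by simp
  next
    case False
    then have "i \<in> {1..n}" using that by auto
    then show ?thesis
      using measurable_resolvent_step[OF step.hyps(1)] w_meas that by auto
  qed
  have [measurable]: "(\<lambda>\<omega>. \<Sum>i=1..n+1. y k i \<omega>) \<in> borel_measurable M"
    by (rule borel_measurable_sum) (use xy_meas in auto)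
  have [measurable]: "(\<lambda>\<omega>. \<Sum>i=1..n+1. x k i \<omega>) \<in> borel_measurable M"
    by (rule borel_measurable_sum) (use xy_meas in auto)
  have "z (Suc k) = (\<lambda>\<omega>. z k \<omega> - \<alpha> k *\<^sub>R (\<Sum>i=1..n+1. y k i \<omega>))"
    using alg_z step.hyps(1) by auto
  also have "\<dots> \<in> borel_measurable M"
    by measurable
  finally have "z (Suc k) \<in> borel_measurable M" .
  moreover have "w (Suc k) i \<in> borel_measurable M" if "i \<in> {1..n+1}" for i
  proof -
    have [measurable]: "w k i \<in> borel_measurable M" "x k i \<in> borel_measurable M"
      using w_meas[OF that] xy_meas[OF that] by auto
    have "w (Suc k) i
        = (\<lambda>\<omega>. w k i \<omega> - \<alpha> k *\<^sub>R (x k i \<omega> - (1 / real (n+1)) *\<^sub>R (\<Sum>j=1..n+1. x k j \<omega>)))"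
      using alg_w step.hyps(1) that by auto
    also have "\<dots> \<in> borel_measurable M"
      by measurable
    finally show ?thesis .
  qed
  ultimately show ?case
    by simp
qed

lemma sum_w_eq_0:
  assumes "k \<ge> 1"
  shows "(\<Sum>i=1..n+1. w k i \<omega>) = 0"
  using assms
proof (induction k rule: dec_induct)
  case base
  then show ?case using init_sum by simp
next
  case (step k)
  define xb where "xb = (1 / real (n+1)) *\<^sub>R (\<Sum>j=1..n+1. x k j \<omega>)"
  have "(\<Sum>i=1..n+1. w (Suc k) i \<omega>) = (\<Sum>i=1..n+1. w k i \<omega> - \<alpha> k *\<^sub>R (x k i \<omega> - xb))"
    using alg_w step.hyps(1) unfolding xb_def by (intro sum.cong) auto
  also have "\<dots> = (\<Sum>i=1..n+1. w k i \<omega>) - \<alpha> k *\<^sub>R (\<Sum>i=1..n+1. x k i \<omega> - xb)"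
    by (simp only: sum_subtractf scaleR_right.sum scaleR_diff_right)
  also have "(\<Sum>i=1..n+1. x k i \<omega> - xb) = 0"
    unfolding xb_def by (simp only: sum_subtractf sum_constant_scaleR card_atLeastAtMost) simp
  finally show ?case
    using step.IH by simp
qed

end

lemma measurable_ext_dist2 [measurable]:
  fixes z :: "'m \<Rightarrow> 'a::euclidean_space"
  assumes "z \<in> borel_measurable S" "\<And>i. i \<in> {1..n+1} \<Longrightarrow> w i \<in> borel_measurable S"
  shows "(\<lambda>\<omega>. ext_dist2 n (z \<omega>) (\<lambda>i. w i \<omega>) zs ws) \<in> borel_measurable S"
  unfolding ext_dist2_def
proof (intro borel_measurable_add borel_measurable_sum)
  have [measurable]: "z \<in> borel_measurable S"
    by (rule assms(1))
  show "(\<lambda>\<omega>. (norm (z \<omega> - zs))\<^sup>2) \<in> borel_measurable S"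
    by measurable
  fix i assume "i \<in> {1..n+1}"
  then have [measurable]: "w i \<in> borel_measurable S" by (rule assms(2))
  show "(\<lambda>\<omega>. (norm (w i \<omega> - ws i))\<^sup>2) \<in> borel_measurable S" by measurable
qed

lemma ext_dist2_split:
  "ext_dist2 n z w zs ws
    = (norm (z - zs))\<^sup>2 + (\<Sum>i=1..n. (norm (w i - ws i))\<^sup>2) + (norm (w (n+1) - ws (n+1)))\<^sup>2"
  unfolding ext_dist2_def by (simp add: add.assoc)

context sps_iteration
begin

abbreviation sol_dist2 :: "'a \<Rightarrow> (nat \<Rightarrow> 'a) \<Rightarrow> nat \<Rightarrow> 'm \<Rightarrow> real"
  where "sol_dist2 zs ws k \<omega> \<equiv> ext_dist2 n (z k \<omega>) (\<lambda>i. w k i \<omega>) zs ws"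

abbreviation \<Gamma> :: "nat \<Rightarrow> 'm \<Rightarrow> 'a"
  where "\<Gamma> k \<omega> \<equiv> B (z k \<omega>) - w k (n+1) \<omega>"

abbreviation dual_residual :: "nat \<Rightarrow> 'm \<Rightarrow> real"
  where "dual_residual k \<omega> \<equiv> \<Sum>i=1..n. (norm (y k i \<omega> - w k i \<omega>))\<^sup>2"

abbreviation T :: "nat \<Rightarrow> 'm \<Rightarrow> real"
  where "T k \<omega> \<equiv> (\<tau> / \<rho>b) * dual_residual k \<omega>
    + (1 / (\<rho>b * \<tau>)) * (\<Sum>i=1..n. (norm (z k \<omega> - x k i \<omega>))\<^sup>2) + 2 * (1 - \<rho>b * L) * (norm (\<Gamma> k \<omega>))\<^sup>2"

abbreviation C\<^sub>1 :: real
  where "C\<^sub>1 \<equiv> 24 * (1 + 10 * \<rho>b\<^sup>2) * real (n+1) * (L\<^sup>2 + 1)\<^sup>2 * (N + 1)\<^sup>2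
    + 8 * real (n+1) * (2 * \<tau>\<^sup>2 + 6 * real (n+1) + 1 + 3 * (real (n+1))\<^sup>2 / \<tau>\<^sup>2)"

abbreviation C\<^sub>2 :: "'a \<Rightarrow> (nat \<Rightarrow> 'a) \<Rightarrow> real"
  where "C\<^sub>2 zs ws \<equiv> 16 * (N + 1) * (1 + 4 * \<rho>b\<^sup>2 * real (n+1) + 9 * \<rho>b\<^sup>2 * L\<^sup>2 * (N + 1)) * (norm (B zs))\<^sup>2
    + 8 * (norm (\<Sum>i=1..n. ws i))\<^sup>2 + 12 * \<rho>b\<^sup>2 * N * (2 * L\<^sup>2 * (N + 1) + real (n+1)) + 4 * N"

abbreviation C\<^sub>3 :: real
  where "C\<^sub>3 \<equiv> 4 * N * L ^ 3"

abbreviation C\<^sub>4 :: "'a \<Rightarrow> real"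
  where "C\<^sub>4 zs \<equiv> 2 * N * L * (1 + 2 * (norm (B zs))\<^sup>2)"

lemma filtration:
  assumes k: "k \<ge> 1"
  shows subalgebra_F: "subalgebra M (F k)" and subalgebra_FE: "subalgebra M (FE k)"
    and sets_F_FE: "sets (F k) \<subseteq> sets (FE k)"
    and measurable_z_F: "z k \<in> borel_measurable (F k)"
    and measurable_w_F: "\<And>i. i \<in> {1..n+1} \<Longrightarrow> w k i \<in> borel_measurable (F k)"
proof -
  define Xs where "Xs = {z j | j. 1 \<le> j \<and> j \<le> k} \<union> {w j i | j i. 1 \<le> j \<and> j \<le> k \<and> 1 \<le> i \<and> i \<le> n+1}"
  have F: "F k = gen_sigma M Xs" and FE: "FE k = gen_sigma M (Xs \<union> {eps k})"
    using F_def FE_def unfolding Xs_def by simp_all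
  have "X \<in> borel_measurable M" if "X \<in> Xs" for X
    using that measurable_iterates unfolding Xs_def by auto
  then show "subalgebra M (F k)" "subalgebra M (FE k)"
    unfolding F FE using noise_rv k by (auto intro!: subalgebra_gen_sigma)
  show "sets (F k) \<subseteq> sets (FE k)"
    unfolding F FE by (rule sets_gen_sigma_mono) auto
  show "z k \<in> borel_measurable (F k)" "\<And>i. i \<in> {1..n+1} \<Longrightarrow> w k i \<in> borel_measurable (F k)"
    unfolding F using k by (auto simp: Xs_def intro!: measurable_gen_sigma)
qed

lemma resolvent_step:
  assumes k: "k \<ge> 1" and i: "i \<in> {1..n}"
  shows "y k i \<omega> \<in> A i (x k i \<omega>)" and "z k \<omega> + \<tau> *\<^sub>R w k i \<omega> = x k i \<omega> + \<tau> *\<^sub>R y k i \<omega>"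
proof -
  obtain u where u: "u \<in> A i (x k i \<omega>)" "z k \<omega> + \<tau> *\<^sub>R w k i \<omega> = x k i \<omega> + \<tau> *\<^sub>R u"
    using resolvent_decomposition[OF A_mm[rule_format, OF i] tau_pos] alg_x k i by metis
  moreover have "y k i \<omega> = u"
    using alg_y k i u(2) tau_pos by simp
  ultimately show "y k i \<omega> \<in> A i (x k i \<omega>)" "z k \<omega> + \<tau> *\<^sub>R w k i \<omega> = x k i \<omega> + \<tau> *\<^sub>R y k i \<omega>"
    by simp_all
qed

lemma step_pointwise:
  assumes sol: "ext_sol n A B zs ws" and k: "k \<ge> 1"
  shows "sol_dist2 zs ws (k+1) \<omega>
    \<le> sol_dist2 zs ws k \<omega> - 2 * \<alpha> k * \<tau> * dual_residual k \<omega>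
      - 2 * \<alpha> k * \<rho> k * (1 - L * \<rho> k) * (norm (\<Gamma> k \<omega>))\<^sup>2
      + (\<alpha> k)\<^sup>2 * (2 * (norm ((\<Sum>i=1..n. y k i \<omega> - w k i \<omega>) + \<Gamma> k \<omega>))\<^sup>2
               + \<tau>\<^sup>2 * dual_residual k \<omega> + (4 * L\<^sup>2 + 1) * (\<rho> k)\<^sup>2 * (norm (\<Gamma> k \<omega>))\<^sup>2)
      + inner (eps k \<omega>) ((- 2 * \<alpha> k * \<rho> k * (1 - 2 * L * \<rho> k)
          + 2 * (\<alpha> k)\<^sup>2 * (4 * L\<^sup>2 + 1) * (\<rho> k)\<^sup>2) *\<^sub>R \<Gamma> k \<omega>)
      + (2 * \<alpha> k * L * (\<rho> k)\<^sup>2 + (\<alpha> k)\<^sup>2 * (4 * L\<^sup>2 + 1) * (\<rho> k)\<^sup>2) * (norm (eps k \<omega>))\<^sup>2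
      + inner (e k \<omega>) ((- 2 * \<alpha> k) *\<^sub>R (z k \<omega> - zs)) + 4 * (\<alpha> k)\<^sup>2 * (norm (e k \<omega>))\<^sup>2"
proof -
  have ws_A: "\<And>i. i \<in> {1..n} \<Longrightarrow> ws i \<in> A i zs" and ws_B: "ws (n+1) = B zs"
    and sum_ws: "(\<Sum>i=1..n+1. ws i) = 0"
    using sol unfolding ext_sol_def by auto
  have mono: "0 \<le> inner (y k i \<omega> - ws i) (x k i \<omega> - zs)" if i: "i \<in> {1..n}" for i
    using maximal_monotone_imp_monotone_op[OF A_mm[rule_format, OF i]] resolvent_step(1)[OF k i]
      ws_A[OF i] unfolding monotone_op_def by blast
  have update: "ext_dist2 n (z (k+1) \<omega>) (\<lambda>i. w (k+1) i \<omega>) zs ws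
      = ext_dist2 n (z k \<omega> - \<alpha> k *\<^sub>R (\<Sum>i=1..n+1. y k i \<omega>))
          (\<lambda>i. w k i \<omega> - \<alpha> k *\<^sub>R (x k i \<omega> - (1 / real (n+1)) *\<^sub>R (\<Sum>j=1..n+1. x k j \<omega>))) zs ws"
    using alg_z alg_w k unfolding ext_dist2_def by (intro arg_cong2[where f="(+)"] sum.cong) auto
  show ?thesis
    unfolding update
  proof (rule splitting_step_pointwise[where w="\<lambda>i. w k i \<omega>" and x="\<lambda>i. x k i \<omega>"
          and y="\<lambda>i. y k i \<omega>" and z="z k \<omega>" and \<epsilon>="eps k \<omega>" and e="e k \<omega>"
          and n=n and ws=ws and zs=zs and B=B and \<tau>=\<tau>,
          OF sum_w_eq_0[OF k, of \<omega>] sum_ws ws_B resolvent_step(2)[OF k, of _ \<omega>] mono])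
    show "x k (n+1) \<omega> = z k \<omega> - \<rho> k *\<^sub>R ((B (z k \<omega>) + eps k \<omega>) - w k (n+1) \<omega>)"
      using alg_xn k by blast
    show "y k (n+1) \<omega> = B (x k (n+1) \<omega>) + e k \<omega>"
      using alg_yn k by blast
    show "0 \<le> inner (B (x k (n+1) \<omega>) - B zs) (x k (n+1) \<omega> - zs)"
      using B_mono unfolding monotone_fun_def by blast
    show "norm (B (x k (n+1) \<omega>) - B (z k \<omega>)) \<le> L * norm (x k (n+1) \<omega> - z k \<omega>)"
      by (rule lipschitz_on_UNIV_norm_le[OF B_lip])
    show "0 \<le> \<alpha> k" "0 \<le> \<rho> k"
      using alpha_pos rho_bd k by (auto simp: less_imp_le)
  qed
qed

lemma residual_bounds:
  assumes sol: "ext_sol n A B zs ws" and k: "k \<ge> 1"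
  shows resolvent_residual_eq: "(\<Sum>i=1..n. (norm (z k \<omega> - x k i \<omega>))\<^sup>2) = \<tau>\<^sup>2 * dual_residual k \<omega>"
    and dual_residual_le: "dual_residual k \<omega>
      \<le> 2 * real n * (norm (z k \<omega> - zs))\<^sup>2 / \<tau>\<^sup>2 + 8 * (\<Sum>i=1..n. (norm (w k i \<omega> - ws i))\<^sup>2)"
    and forward_residual_le: "(norm (\<Gamma> k \<omega>))\<^sup>2
      \<le> 2 * L\<^sup>2 * (norm (z k \<omega> - zs))\<^sup>2 + 2 * (norm (w k (n+1) \<omega> - ws (n+1)))\<^sup>2"
    and noise_variance_le: "N1 + N2 * (norm (B (z k \<omega>)))\<^sup>2
      \<le> N + 2 * N * L\<^sup>2 * (norm (z k \<omega> - zs))\<^sup>2 + 2 * N * (norm (B zs))\<^sup>2"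
    and total_residual_le: "(norm ((\<Sum>i=1..n. y k i \<omega> - w k i \<omega>) + \<Gamma> k \<omega>))\<^sup>2
      \<le> real (n+1) * (dual_residual k \<omega> + (norm (\<Gamma> k \<omega>))\<^sup>2)"
proof -
  have ws_A: "\<And>i. i \<in> {1..n} \<Longrightarrow> ws i \<in> A i zs" and ws_B: "ws (n+1) = B zs"
    using sol unfolding ext_sol_def by auto
  show "(\<Sum>i=1..n. (norm (z k \<omega> - x k i \<omega>))\<^sup>2) = \<tau>\<^sup>2 * dual_residual k \<omega>"
    unfolding sum_distrib_left
  proof (rule sum.cong[OF refl])
    fix i assume "i \<in> {1..n}"
    then have "z k \<omega> - x k i \<omega> = \<tau> *\<^sub>R (y k i \<omega> - w k i \<omega>)"
      using resolvent_step(2)[OF k] by (simp add: algebra_simps)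
    then show "(norm (z k \<omega> - x k i \<omega>))\<^sup>2 = \<tau>\<^sup>2 * (norm (y k i \<omega> - w k i \<omega>))\<^sup>2"
      by (simp add: power_mult_distrib)
  qed
  have "norm (y k i \<omega> - w k i \<omega>) \<le> norm (z k \<omega> - zs) / \<tau> + 2 * norm (w k i \<omega> - ws i)"
    if "i \<in> {1..n}" for i
    using resolvent_step_dual_le[OF A_mm[rule_format, OF that] tau_pos ws_A[OF that]]
      alg_x resolvent_step(2) k that by blast
  then have "dual_residual k \<omega>
      \<le> 2 * real (card {1..n}) * (norm (z k \<omega> - zs) / \<tau>)\<^sup>2 + 8 * (\<Sum>i=1..n. (norm (w k i \<omega> - ws i))\<^sup>2)"
    by (rule sum_power2_norm_le_of_le)
  then show "dual_residual k \<omega>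
      \<le> 2 * real n * (norm (z k \<omega> - zs))\<^sup>2 / \<tau>\<^sup>2 + 8 * (\<Sum>i=1..n. (norm (w k i \<omega> - ws i))\<^sup>2)"
    by (simp add: power_divide)
  show "(norm (\<Gamma> k \<omega>))\<^sup>2 \<le> 2 * L\<^sup>2 * (norm (z k \<omega> - zs))\<^sup>2 + 2 * (norm (w k (n+1) \<omega> - ws (n+1)))\<^sup>2"
    using power2_norm_lipschitz_le[OF B_lip, of "z k \<omega>" "w k (n+1) \<omega>" zs] ws_B
    by (simp add: norm_minus_commute)
  have N_le: "N2 \<le> N" "N1 \<le> N"
    using N_def by auto
  have "N2 * (norm (B (z k \<omega>)))\<^sup>2 \<le> N * (norm (B (z k \<omega>)))\<^sup>2"
    using N_le by (simp add: mult_right_mono)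
  also have "\<dots> \<le> N * (2 * L\<^sup>2 * (norm (z k \<omega> - zs))\<^sup>2 + 2 * (norm (B zs))\<^sup>2)"
    using power2_norm_lipschitz_le[OF B_lip, of "z k \<omega>" 0 zs] N_le N_nonneg
    by (intro mult_left_mono) auto
  finally show "N1 + N2 * (norm (B (z k \<omega>)))\<^sup>2
      \<le> N + 2 * N * L\<^sup>2 * (norm (z k \<omega> - zs))\<^sup>2 + 2 * N * (norm (B zs))\<^sup>2"
    using N_le by (simp add: algebra_simps)
  show "(norm ((\<Sum>i=1..n. y k i \<omega> - w k i \<omega>) + \<Gamma> k \<omega>))\<^sup>2
      \<le> real (n+1) * (dual_residual k \<omega> + (norm (\<Gamma> k \<omega>))\<^sup>2)"
    using power2_norm_sum_le[of "\<lambda>i. if i = n+1 then \<Gamma> k \<omega> else y k i \<omega> - w k i \<omega>" "{1..n+1}"]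
    by simp
qed

lemma collect_constants:
  assumes sol: "ext_sol n A B zs ws" and k: "k \<ge> 1"
  shows "sol_dist2 zs ws k \<omega> - 2 * \<alpha> k * \<tau> * dual_residual k \<omega>
      - 2 * \<alpha> k * \<rho> k * (1 - L * \<rho> k) * (norm (\<Gamma> k \<omega>))\<^sup>2
      + (\<alpha> k)\<^sup>2 * (2 * (norm ((\<Sum>i=1..n. y k i \<omega> - w k i \<omega>) + \<Gamma> k \<omega>))\<^sup>2
               + \<tau>\<^sup>2 * dual_residual k \<omega> + (4 * L\<^sup>2 + 1) * (\<rho> k)\<^sup>2 * (norm (\<Gamma> k \<omega>))\<^sup>2)
      + (2 * \<alpha> k * L * (\<rho> k)\<^sup>2 + (\<alpha> k)\<^sup>2 * (4 * L\<^sup>2 + 1) * (\<rho> k)\<^sup>2) * (N1 + N2 * (norm (B (z k \<omega>)))\<^sup>2)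
      + 4 * (\<alpha> k)\<^sup>2 * ((N4 * (8 * L\<^sup>2 * (norm (z k \<omega> - zs))\<^sup>2
          + 8 * L\<^sup>2 * (\<rho> k)\<^sup>2 * (norm (\<Gamma> k \<omega>))\<^sup>2 + 2 * (norm (B zs))\<^sup>2) + N3)
        + 4 * N4 * L\<^sup>2 * (\<rho> k)\<^sup>2 * (N1 + N2 * (norm (B (z k \<omega>)))\<^sup>2))
    \<le> (1 + C\<^sub>1 * (\<alpha> k)\<^sup>2 + C\<^sub>3 * \<alpha> k * (\<rho> k)\<^sup>2) * sol_dist2 zs ws k \<omega> - \<alpha> k * \<rho> k * T k \<omega>
      + C\<^sub>2 zs ws * (\<alpha> k)\<^sup>2 + C\<^sub>4 zs * \<alpha> k * (\<rho> k)\<^sup>2"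
proof -
  have "ws (n+1) = B zs" "(\<Sum>i=1..n+1. ws i) = 0"
    using sol unfolding ext_sol_def by auto
  then have "(\<Sum>i=1..n. ws i) = - B zs"
    by (simp add: eq_neg_iff_add_eq_0)
  then have sum_ws_n: "(norm (\<Sum>i=1..n. ws i))\<^sup>2 = (norm (B zs))\<^sup>2"
    by simp
  have "0 \<le> \<alpha> k" "0 \<le> \<rho> k" "\<rho> k \<le> \<rho>b"
    using alpha_pos rho_bd k by (auto simp: less_imp_le)
  note bound = one_step_coefficients_le[where \<alpha>="\<alpha> k" and \<rho>="\<rho> k" and \<rho>b=\<rho>b and \<tau>=\<tau>
      and L=L and N=N and D="sol_dist2 zs ws k \<omega>"
      and Y="dual_residual k \<omega>" and X="\<Sum>i=1..n. (norm (z k \<omega> - x k i \<omega>))\<^sup>2"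
      and G="(norm (\<Gamma> k \<omega>))\<^sup>2" and V="(norm ((\<Sum>i=1..n. y k i \<omega> - w k i \<omega>) + \<Gamma> k \<omega>))\<^sup>2"
      and S="N1 + N2 * (norm (B (z k \<omega>)))\<^sup>2" and R="N4 * (8 * L\<^sup>2 * (norm (z k \<omega> - zs))\<^sup>2
        + 8 * L\<^sup>2 * (\<rho> k)\<^sup>2 * (norm (\<Gamma> k \<omega>))\<^sup>2 + 2 * (norm (B zs))\<^sup>2) + N3"
      and dz="(norm (z k \<omega> - zs))\<^sup>2" and dw="\<Sum>i=1..n. (norm (w k i \<omega> - ws i))\<^sup>2"
      and dl="(norm (w k (n+1) \<omega> - ws (n+1)))\<^sup>2" and bz="(norm (B zs))\<^sup>2" and n=n,
      OF this tau_pos L_pos n _ _ _ _ _ _ _ _ _ ext_dist2_split _ resolvent_residual_eq[OF sol k] _ _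
      dual_residual_le[OF sol k] forward_residual_le[OF sol k] noise_variance_le[OF sol k]
      total_residual_le[OF sol k] order_refl]
  show ?thesis
    unfolding sum_ws_n
    by (rule bound) (use N_def N_nonneg in \<open>simp_all add: sum_nonneg\<close>)
qed

lemma measurable_residuals_F:
  assumes k: "k \<ge> 1"
  shows "(\<lambda>\<omega>. dual_residual k \<omega>) \<in> borel_measurable (F k)"
    and "(\<lambda>\<omega>. \<Sum>i=1..n. y k i \<omega> - w k i \<omega>) \<in> borel_measurable (F k)"
proof -
  have [measurable]: "y k i \<in> borel_measurable (F k)" "w k i \<in> borel_measurable (F k)" if "i \<in> {1..n}" for i
    using measurable_resolvent_step[OF k that] measurable_z_F[OF k] measurable_w_F[OF k] that by auto
  show "(\<lambda>\<omega>. dual_residual k \<omega>) \<in> borel_measurable (F k)"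
    "(\<lambda>\<omega>. \<Sum>i=1..n. y k i \<omega> - w k i \<omega>) \<in> borel_measurable (F k)"
    by (rule borel_measurable_sum, measurable)+
qed

lemma forward_noise_variance:
  assumes k: "k \<ge> 1"
  shows "AE \<omega> in M. nn_cond_exp M (FE k) (\<lambda>\<omega>. ennreal ((norm (e k \<omega>))\<^sup>2)) \<omega>
    \<le> ennreal (N4 * (8 * L\<^sup>2 * (norm (z k \<omega> - zs))\<^sup>2 + 8 * L\<^sup>2 * (\<rho> k)\<^sup>2 * (norm (\<Gamma> k \<omega>))\<^sup>2
        + 2 * (norm (B zs))\<^sup>2) + N3 + 4 * N4 * L\<^sup>2 * (\<rho> k)\<^sup>2 * (norm (eps k \<omega>))\<^sup>2)"
  using noise_cond
proof eventually_elim
  case (elim \<omega>)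
  have "N4 * (norm (B (x k (n+1) \<omega>)))\<^sup>2 \<le> N4 * (8 * L\<^sup>2 * (norm (z k \<omega> - zs))\<^sup>2
      + 8 * L\<^sup>2 * (\<rho> k)\<^sup>2 * (norm (\<Gamma> k \<omega>))\<^sup>2 + 4 * L\<^sup>2 * (\<rho> k)\<^sup>2 * (norm (eps k \<omega>))\<^sup>2
      + 2 * (norm (B zs))\<^sup>2)"
    using power2_norm_forward_point_le[OF B_lip] alg_xn k N_nonneg by (intro mult_left_mono) auto
  then have "ennreal (N3 + N4 * (norm (B (x k (n+1) \<omega>)))\<^sup>2)
      \<le> ennreal (N4 * (8 * L\<^sup>2 * (norm (z k \<omega> - zs))\<^sup>2 + 8 * L\<^sup>2 * (\<rho> k)\<^sup>2 * (norm (\<Gamma> k \<omega>))\<^sup>2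
        + 2 * (norm (B zs))\<^sup>2) + N3 + 4 * N4 * L\<^sup>2 * (\<rho> k)\<^sup>2 * (norm (eps k \<omega>))\<^sup>2)"
    by (intro ennreal_leI) (simp add: algebra_simps)
  then show ?case
    using elim k by (blast intro: order_trans)
qed

lemma conditional_step_bound:
  assumes sol: "ext_sol n A B zs ws" and k: "k \<ge> 1"
  shows "AE \<omega> in M. nn_cond_exp M (F k) (\<lambda>\<omega>. ennreal (sol_dist2 zs ws (k+1) \<omega>)) \<omega>
    \<le> ennreal ((1 + C\<^sub>1 * (\<alpha> k)\<^sup>2 + C\<^sub>3 * \<alpha> k * (\<rho> k)\<^sup>2) * sol_dist2 zs ws k \<omega> - \<alpha> k * \<rho> k * T k \<omega>
      + C\<^sub>2 zs ws * (\<alpha> k)\<^sup>2 + C\<^sub>4 zs * \<alpha> k * (\<rho> k)\<^sup>2)"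
proof -
  define cs where "cs = 2 * \<alpha> k * L * (\<rho> k)\<^sup>2 + (\<alpha> k)\<^sup>2 * (4 * L\<^sup>2 + 1) * (\<rho> k)\<^sup>2"
  define ce where "ce = 4 * (\<alpha> k)\<^sup>2"
  define R2 where "R2 = 4 * N4 * L\<^sup>2 * (\<rho> k)\<^sup>2"
  define P where "P \<omega> = sol_dist2 zs ws k \<omega> - 2 * \<alpha> k * \<tau> * dual_residual k \<omega>
      - 2 * \<alpha> k * \<rho> k * (1 - L * \<rho> k) * (norm (\<Gamma> k \<omega>))\<^sup>2
      + (\<alpha> k)\<^sup>2 * (2 * (norm ((\<Sum>i=1..n. y k i \<omega> - w k i \<omega>) + \<Gamma> k \<omega>))\<^sup>2
               + \<tau>\<^sup>2 * dual_residual k \<omega> + (4 * L\<^sup>2 + 1) * (\<rho> k)\<^sup>2 * (norm (\<Gamma> k \<omega>))\<^sup>2)" for \<omega>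
  define V where "V \<omega> = (- 2 * \<alpha> k * \<rho> k * (1 - 2 * L * \<rho> k)
      + 2 * (\<alpha> k)\<^sup>2 * (4 * L\<^sup>2 + 1) * (\<rho> k)\<^sup>2) *\<^sub>R \<Gamma> k \<omega>" for \<omega>
  define U where "U \<omega> = (- 2 * \<alpha> k) *\<^sub>R (z k \<omega> - zs)" for \<omega>
  define Sb where "Sb \<omega> = N1 + N2 * (norm (B (z k \<omega>)))\<^sup>2" for \<omega>
  define R1 where "R1 \<omega> = N4 * (8 * L\<^sup>2 * (norm (z k \<omega> - zs))\<^sup>2 + 8 * L\<^sup>2 * (\<rho> k)\<^sup>2 * (norm (\<Gamma> k \<omega>))\<^sup>2
      + 2 * (norm (B zs))\<^sup>2) + N3" for \<omega>
  have [measurable]: "z k \<in> borel_measurable (F k)" "eps k \<in> borel_measurable M" "e k \<in> borel_measurable M"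
    using measurable_z_F[OF k] noise_rv k by auto
  have [measurable]: "w k i \<in> borel_measurable (F k)" if "i \<in> {1..n+1}" for i
    using measurable_w_F[OF k that] .
  have [measurable]: "w k (n+1) \<in> borel_measurable (F k)"
    using measurable_w_F[OF k] by simp
  note measurable_residuals_F[OF k, measurable]
  have meas: "P \<in> borel_measurable (F k)" "V \<in> borel_measurable (F k)" "U \<in> borel_measurable (F k)"
    "Sb \<in> borel_measurable (F k)" "R1 \<in> borel_measurable (F k)"
    unfolding P_def V_def U_def Sb_def R1_def by measurable
  have Q_meas: "(\<lambda>\<omega>. sol_dist2 zs ws (k+1) \<omega>) \<in> borel_measurable M"
    using measurable_iterates[of "k+1"] by (intro measurable_ext_dist2) auto
  have "AE \<omega> in M.
       (\<forall>b\<in>Basis. real_cond_exp M (F k) (\<lambda>\<omega>. inner (eps k \<omega>) b) \<omega> = 0)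
     \<and> (\<forall>b\<in>Basis. real_cond_exp M (F k) (\<lambda>\<omega>. inner (e k \<omega>) b) \<omega> = 0)
     \<and> nn_cond_exp M (F k) (\<lambda>\<omega>. ennreal ((norm (eps k \<omega>))\<^sup>2)) \<omega> \<le> ennreal (Sb \<omega>)"
    using noise_cond unfolding Sb_def by eventually_elim (use k in blast)
  then have mean_var_eps: "AE \<omega> in M. \<forall>b\<in>Basis. real_cond_exp M (F k) (\<lambda>\<omega>. inner (eps k \<omega>) b) \<omega> = 0"
    "AE \<omega> in M. \<forall>b\<in>Basis. real_cond_exp M (F k) (\<lambda>\<omega>. inner (e k \<omega>) b) \<omega> = 0"
    "AE \<omega> in M. nn_cond_exp M (F k) (\<lambda>\<omega>. ennreal ((norm (eps k \<omega>))\<^sup>2)) \<omega> \<le> ennreal (Sb \<omega>)"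
    by (auto elim: eventually_mono)
  have var_e: "AE \<omega> in M. nn_cond_exp M (FE k) (\<lambda>\<omega>. ennreal ((norm (e k \<omega>))\<^sup>2)) \<omega>
      \<le> ennreal (R1 \<omega> + R2 * (norm (eps k \<omega>))\<^sup>2)"
    unfolding R1_def R2_def by (rule forward_noise_variance[OF k])
  have nonneg: "0 \<le> R2" "0 \<le> cs" "0 \<le> ce" "\<And>\<omega>. 0 \<le> Sb \<omega>" "\<And>\<omega>. 0 \<le> R1 \<omega>"
    "\<And>\<omega>. 0 \<le> sol_dist2 zs ws (k+1) \<omega>"
    using N_nonneg alpha_pos rho_bd L_pos k
    by (auto simp: R2_def cs_def ce_def Sb_def R1_def ext_dist2_def sum_nonneg less_imp_le)
  have Q_le: "sol_dist2 zs ws (k+1) \<omega> \<le> P \<omega> + inner (eps k \<omega>) (V \<omega>) + cs * (norm (eps k \<omega>))\<^sup>2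
      + inner (e k \<omega>) (U \<omega>) + ce * (norm (e k \<omega>))\<^sup>2" for \<omega>
    unfolding P_def V_def U_def cs_def ce_def by (rule step_pointwise[OF sol k])
  interpret noise: noisy_quadratic_bound M "F k" "FE k" "\<lambda>\<omega>. sol_dist2 zs ws (k+1) \<omega>" P Sb R1 V U
      "eps k" "e k" R2 cs ce
    using noise_rv noise_int k
    by (intro noisy_quadratic_bound.intro[OF M subalgebra_F[OF k] subalgebra_FE[OF k] sets_F_FE[OF k]
          Q_meas _ _ meas _ _ mean_var_eps var_e nonneg Q_le]) auto
  have "AE \<omega> in M. nn_cond_exp M (F k) (\<lambda>\<omega>. ennreal (sol_dist2 zs ws (k+1) \<omega>)) \<omega>
      \<le> ennreal (P \<omega> + cs * Sb \<omega> + ce * (R1 \<omega> + R2 * Sb \<omega>))"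
    by (rule noise.nn_cond_exp_le)
  moreover have "P \<omega> + cs * Sb \<omega> + ce * (R1 \<omega> + R2 * Sb \<omega>)
      \<le> (1 + C\<^sub>1 * (\<alpha> k)\<^sup>2 + C\<^sub>3 * \<alpha> k * (\<rho> k)\<^sup>2) * sol_dist2 zs ws k \<omega> - \<alpha> k * \<rho> k * T k \<omega>
        + C\<^sub>2 zs ws * (\<alpha> k)\<^sup>2 + C\<^sub>4 zs * \<alpha> k * (\<rho> k)\<^sup>2" for \<omega>
    unfolding P_def cs_def ce_def R1_def R2_def Sb_def by (rule collect_constants[OF sol k])
  ultimately show ?thesis
    by (auto elim!: eventually_mono intro: order_trans ennreal_leI)
qed
end

theorem lemma3:
  fixes M :: "'m measure"
    and n :: nat
    and A :: "nat \<Rightarrow> 'a::euclidean_space \<Rightarrow> 'a set"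
    and B :: "'a \<Rightarrow> 'a"
    and L \<tau> \<rho>b N1 N2 N3 N4 N C1 C3 :: real
    and \<alpha> \<rho> :: "nat \<Rightarrow> real"
    and z :: "nat \<Rightarrow> 'm \<Rightarrow> 'a"
    and w x y :: "nat \<Rightarrow> nat \<Rightarrow> 'm \<Rightarrow> 'a"
    and eps e :: "nat \<Rightarrow> 'm \<Rightarrow> 'a"
    and F FE :: "nat \<Rightarrow> 'm measure"
  assumes M: "prob_space M"
    and n: "n \<ge> 1"
    and A_mm: "\<forall>i\<in>{1..n}. maximal_monotone (A i)"
    and B_mono: "monotone_fun B"
    and L_pos: "L > 0"
    and B_lip: "L-lipschitz_on UNIV B"
    and S_ne: "\<exists>zs ws. ext_sol n A B zs ws"
    and tau_pos: "\<tau> > 0"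
    and alpha_pos: "\<forall>k\<ge>1. \<alpha> k > 0"
    and rho_bd: "\<forall>k\<ge>1. 0 < \<rho> k \<and> \<rho> k \<le> \<rho>b"
    and rhob_lt: "\<rho>b < 1 / L"
    \<comment> \<open>initial point p^1\<close>
    and init_meas: "z 1 \<in> borel_measurable M" "\<forall>i\<in>{1..n+1}. w 1 i \<in> borel_measurable M"
    and init_sum: "\<forall>\<omega>. (\<Sum>i=1..n+1. w 1 i \<omega>) = 0"
    \<comment> \<open>Algorithm SPS\<close>
    and alg_x: "\<forall>k\<ge>1. \<forall>i\<in>{1..n}. \<forall>\<omega>. x k i \<omega> = resolvent \<tau> (A i) (z k \<omega> + \<tau> *\<^sub>R w k i \<omega>)"
    and alg_y: "\<forall>k\<ge>1. \<forall>i\<in>{1..n}. \<forall>\<omega>.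
                  y k i \<omega> = (1 / \<tau>) *\<^sub>R ((z k \<omega> + \<tau> *\<^sub>R w k i \<omega>) - x k i \<omega>)"
    and alg_xn: "\<forall>k\<ge>1. \<forall>\<omega>.
                  x k (n+1) \<omega> = z k \<omega> - \<rho> k *\<^sub>R ((B (z k \<omega>) + eps k \<omega>) - w k (n+1) \<omega>)"
    and alg_yn: "\<forall>k\<ge>1. \<forall>\<omega>. y k (n+1) \<omega> = B (x k (n+1) \<omega>) + e k \<omega>"
    and alg_z: "\<forall>k\<ge>1. \<forall>\<omega>. z (k+1) \<omega> = z k \<omega> - \<alpha> k *\<^sub>R (\<Sum>i=1..n+1. y k i \<omega>)"
    and alg_w: "\<forall>k\<ge>1. \<forall>i\<in>{1..n+1}. \<forall>\<omega>.
                  w (k+1) i \<omega> = w k i \<omega> - \<alpha> k *\<^sub>R (x k i \<omega> - (1 / real (n+1)) *\<^sub>R (\<Sum>j=1..n+1. x k j \<omega>))"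
    \<comment> \<open>noise variables\<close>
    and noise_rv: "\<forall>k\<ge>1. eps k \<in> borel_measurable M \<and> e k \<in> borel_measurable M"
    and noise_int: "\<forall>k\<ge>1. integrable M (eps k) \<and> integrable M (e k)"
    \<comment> \<open>filtrations F_k = sigma(p^1..p^k) and sigma(F_k, E_k), E_k = sigma(eps^k)\<close>
    and F_def: "\<forall>k. F k = gen_sigma M ({z j | j. 1 \<le> j \<and> j \<le> k}
                   \<union> {w j i | j i. 1 \<le> j \<and> j \<le> k \<and> 1 \<le> i \<and> i \<le> n+1})"
    and FE_def: "\<forall>k. FE k = gen_sigma M ({z j | j. 1 \<le> j \<and> j \<le> k}
                   \<union> {w j i | j i. 1 \<le> j \<and> j \<le> k \<and> 1 \<le> i \<and> i \<le> n+1} \<union> {eps k})"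
    and N_nonneg: "0 \<le> N1" "0 \<le> N2" "0 \<le> N3" "0 \<le> N4"
    and N_def: "N = max (max N1 N2) (max N3 N4)"
    and noise_cond: "AE \<omega> in M. \<forall>k\<ge>1.
         (\<forall>b\<in>Basis. real_cond_exp M (F k) (\<lambda>\<omega>. inner (eps k \<omega>) b) \<omega> = 0)
       \<and> (\<forall>b\<in>Basis. real_cond_exp M (F k) (\<lambda>\<omega>. inner (e k \<omega>) b) \<omega> = 0)
       \<and> nn_cond_exp M (F k) (\<lambda>\<omega>. ennreal ((norm (eps k \<omega>))\<^sup>2)) \<omega>
            \<le> ennreal (N1 + N2 * (norm (B (z k \<omega>)))\<^sup>2)
       \<and> nn_cond_exp M (FE k) (\<lambda>\<omega>. ennreal ((norm (e k \<omega>))\<^sup>2)) \<omega>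
            \<le> ennreal (N3 + N4 * (norm (B (x k (n+1) \<omega>)))\<^sup>2)"
    and C1_def: "C1 = 24 * (1 + 10 * \<rho>b\<^sup>2) * real (n+1) * (L\<^sup>2 + 1)\<^sup>2 * (N + 1)\<^sup>2
                    + 8 * real (n+1) * (2 * \<tau>\<^sup>2 + 6 * real (n+1) + 1 + 3 * (real (n+1))\<^sup>2 / \<tau>\<^sup>2)"
    and C3_def: "C3 = 4 * N * L ^ 3"
  shows "\<forall>zs ws. ext_sol n A B zs ws \<longrightarrow>
    (let C2 = 16 * (N + 1) * (1 + 4 * \<rho>b\<^sup>2 * real (n+1) + 9 * \<rho>b\<^sup>2 * L\<^sup>2 * (N + 1)) * (norm (B zs))\<^sup>2
              + 8 * (norm (\<Sum>i=1..n. ws i))\<^sup>2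
              + 12 * \<rho>b\<^sup>2 * N * (2 * L\<^sup>2 * (N + 1) + real (n+1)) + 4 * N;
         C4 = 2 * N * L * (1 + 2 * (norm (B zs))\<^sup>2)
     in AE \<omega> in M. \<forall>k\<ge>1.
        nn_cond_exp M (F k) (\<lambda>\<omega>. ennreal (ext_dist2 n (z (k+1) \<omega>) (\<lambda>i. w (k+1) i \<omega>) zs ws)) \<omega>
        \<le> ennreal ((1 + C1 * (\<alpha> k)\<^sup>2 + C3 * \<alpha> k * (\<rho> k)\<^sup>2) * ext_dist2 n (z k \<omega>) (\<lambda>i. w k i \<omega>) zs ws
             - \<alpha> k * \<rho> k *
                 ((\<tau> / \<rho>b) * (\<Sum>i=1..n. (norm (y k i \<omega> - w k i \<omega>))\<^sup>2)
                  + (1 / (\<rho>b * \<tau>)) * (\<Sum>i=1..n. (norm (z k \<omega> - x k i \<omega>))\<^sup>2)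
                  + 2 * (1 - \<rho>b * L) * (norm (B (z k \<omega>) - w k (n+1) \<omega>))\<^sup>2)
             + C2 * (\<alpha> k)\<^sup>2 + C4 * \<alpha> k * (\<rho> k)\<^sup>2))"
proof -
  interpret sps_iteration M n A B L \<tau> \<rho>b N1 N2 N3 N4 N \<alpha> \<rho> z w x y eps e F FE
    by (rule sps_iteration.intro) (fact+)
  show ?thesis
    unfolding Let_def C1_def C3_def
  proof (intro allI impI)
    fix zs ws assume "ext_sol n A B zs ws"
    then show "AE \<omega> in M. \<forall>k\<ge>1. nn_cond_exp M (F k) (\<lambda>\<omega>. ennreal (sol_dist2 zs ws (k+1) \<omega>)) \<omega>
      \<le> ennreal ((1 + C\<^sub>1 * (\<alpha> k)\<^sup>2 + C\<^sub>3 * \<alpha> k * (\<rho> k)\<^sup>2) * sol_dist2 zs ws k \<omega> - \<alpha> k * \<rho> k * T k \<omega>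
        + C\<^sub>2 zs ws * (\<alpha> k)\<^sup>2 + C\<^sub>4 zs * \<alpha> k * (\<rho> k)\<^sup>2)"
      unfolding AE_all_countable by (intro allI AE_impI conditional_step_bound)
  qed
qed

end
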